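(* Let $n$ be a positive integer and $c_1,\dots,c_n$ non-negative integers with $n=c_1+2c_2+\cdots+nc_n$, $\mathbf c=(c_1,\dots,c_n)$. The coefficient of $t_1^{c_1}\cdots t_n^{c_n}/(c_1!\cdots c_n!)$ in \[ \prod_{j\ge1}\exp(t_{2j-1})\;\cosh\Big(\sum_{j\ge1}\Big(\frac{2j-1}{2}t_{2j-1}^2+j\,t_{2j}^2\Big)\Big) \] is the number of even square roots in $S_n$ of a permutation of cycle type $\mathbf c$, and the coefficient of the same monomial in \[ \prod_{j\ge1}\exp(t_{2j-1})\;\sinh\Big(\sum_{j\ge1}\Big(\frac{2j-1}{2}t_{2j-1}^2+j\,t_{2j}^2\Big)\Big) \] is the number of odd square roots in $S_n$ of a permutation of cycle type $\mathbf c$.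
   Context: The cycle type of $\sigma\in S_n$ is $(c_1,\dots,c_n)$ where $c_i$ is the number of $i$-cycles (fixed points count as $1$-cycles). A square root of $\sigma$ is $\tau\in S_n$ with $\tau^2=\sigma$; it is even/odd according to the parity of $\tau$. The series are formal power series in $t_1,t_2,\dots$. *)

theory Defs
  imports Complex_Main "HOL-Combinatorics.Combinatorics"
begin

(* Formal power series in the variables t_1, t_2, ... with real coefficients.
   A monomial t_1^{m 1} t_2^{m 2} ... is an exponent vector m :: nat => nat
   (finitely supported); a series is its coefficient function. *)
type_synonym mser = "(nat \<Rightarrow> nat) \<Rightarrow> real"

definition mzero :: mser where "mzero = (\<lambda>m. 0)"
definition mone :: mser where "mone = (\<lambda>m. if m = (\<lambda>_. 0) then 1 else 0)"
definition madd :: "mser \<Rightarrow> mser \<Rightarrow> mser" where "madd f g = (\<lambda>m. f m + g m)"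
definition mneg :: "mser \<Rightarrow> mser" where "mneg f = (\<lambda>m. - f m)"
definition msmult :: "real \<Rightarrow> mser \<Rightarrow> mser" where "msmult a f = (\<lambda>m. a * f m)"

definition mmul :: "mser \<Rightarrow> mser \<Rightarrow> mser" where
  "mmul f g = (\<lambda>m. \<Sum>(a, b) \<in> {(a, b). \<forall>i. a i + b i = m i}. f a * g b)"

definition mpow :: "mser \<Rightarrow> nat \<Rightarrow> mser" where
  "mpow f k = (mmul f ^^ k) mone"

definition mvar :: "nat \<Rightarrow> mser" where
  "mvar i = (\<lambda>m. if m = (\<lambda>k. if k = i then 1 else 0) then 1 else 0)"

definition mdeg :: "(nat \<Rightarrow> nat) \<Rightarrow> nat" where
  "mdeg m = (\<Sum>i \<in> {i. m i \<noteq> 0}. m i)"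

(* exp f = sum_k f^k / k!, for series f with zero constant term (the only case used);
   then f^k only has monomials of degree >= k, so the coefficientwise sum is finite. *)
definition mexp :: "mser \<Rightarrow> mser" where
  "mexp f = (\<lambda>m. \<Sum>k \<le> mdeg m. mpow f k m / fact k)"

definition mcosh :: "mser \<Rightarrow> mser" where
  "mcosh f = msmult (1/2) (madd (mexp f) (mexp (mneg f)))"

definition msinh :: "mser \<Rightarrow> mser" where
  "msinh f = msmult (1/2) (madd (mexp f) (mneg (mexp (mneg f))))"

(* coefficientwise infinite sum sum_{j} F j (each coefficient has finitely many
   nonzero contributions in the uses below) *)
definition msuminf :: "(nat \<Rightarrow> mser) \<Rightarrow> mser" where
  "msuminf F = (\<lambda>m. \<Sum>j \<in> {j. F j m \<noteq> 0}. F j m)"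

definition oddvars :: mser where
  "oddvars = msuminf (\<lambda>j. if j = 0 then mzero else mvar (2*j - 1))"

definition quadsum :: mser where
  "quadsum = msuminf (\<lambda>j. if j = 0 then mzero else
      madd (msmult ((2 * real j - 1) / 2) (mpow (mvar (2*j - 1)) 2))
           (msmult (real j) (mpow (mvar (2*j)) 2)))"

(* prod_{j>=1} exp(t_{2j-1}) cosh(...) and ... sinh(...);
   prod_{j>=1} exp(t_{2j-1}) is written as exp(sum_{j>=1} t_{2j-1}) *)
definition even_series :: mser where
  "even_series = mmul (mexp oddvars) (mcosh quadsum)"

definition odd_series :: mser where
  "odd_series = mmul (mexp oddvars) (msinh quadsum)"

definition egf_coeff :: "mser \<Rightarrow> nat \<Rightarrow> (nat \<Rightarrow> nat) \<Rightarrow> real" where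
  "egf_coeff f n c = f c * (\<Prod>i = 1..n. fact (c i))"

definition has_cycle_type :: "nat \<Rightarrow> (nat \<Rightarrow> nat) \<Rightarrow> (nat \<Rightarrow> nat) \<Rightarrow> bool" where
  "has_cycle_type n \<sigma> c =
     (\<forall>i \<in> {1..n}. card {orbit \<sigma> x | x. x \<in> {1..n} \<and> card (orbit \<sigma> x) = i} = c i)"

end

theory Submission
  imports Defs "HOL-Number_Theory.Cong"
begin

(*
  Weight each square root of \<sigma> by 1 if it is even and by s = \<plusminus>1 if it is odd; the weighted
  count is (#even roots) + s (#odd roots).  Let x lie in a k-cycle C of \<sigma> and let \<tau> be a root.
  Either \<tau> x \<in> C, which forces k odd and \<tau> = \<sigma>^((k+1)/2) on C (an even permutation there), or
  \<tau> x = y lies in another k-cycle D, and then \<tau> is the 2k-cycle (x y \<sigma>x \<sigma>y ...) on C \<union> D, which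
  is odd.  Removing C, resp. C \<union> D, shows that the weighted count is \<Prod>\<^sub>k G\<^sub>k(c\<^sub>k), where
  G\<^sub>k(m) = [k odd] G\<^sub>k(m-1) + s k (m-1) G\<^sub>k(m-2).  On the series side exp(\<Sum> t\<^sub>2\<^sub>j\<^sub>-\<^sub>1) and
  exp(s \<Sum> k t\<^sub>k\<^sup>2/2) factor over the variables, and m! times the coefficient of t\<^sup>m in
  exp([k odd] t + s k t\<^sup>2/2) satisfies the same recursion.  Taking s = 1 and s = -1 and forming
  half sums and half differences gives the cosh and sinh series.
*)

section \<open>Orbits and cycle counts\<close>

lemma orbit_eq_of_mem:
  assumes "permutation \<sigma>" "y \<in> orbit \<sigma> x"
  shows "orbit \<sigma> y = orbit \<sigma> x"
  using orbit_cyclic_eq3[OF cyclic_on_orbit'[OF assms(1)] assms(2)] .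

lemma orbits_disjoint:
  assumes "permutation \<sigma>" "orbit \<sigma> x \<noteq> orbit \<sigma> y"
  shows "orbit \<sigma> x \<inter> orbit \<sigma> y = {}"
  using orbit_eq_of_mem[OF assms(1)] assms(2) by (metis disjoint_iff)

lemma orbit_eq_range_funpow:
  assumes "permutation \<sigma>"
  shows "orbit \<sigma> x = range (\<lambda>i. (\<sigma> ^^ i) x)"
  using orbit_altdef_permutation[OF assms] by auto

lemma card_orbit_eq_least_power:
  assumes "permutation \<sigma>"
  shows "card (orbit \<sigma> x) = least_power \<sigma> x"
proof -
  have "orbit \<sigma> x = set (support \<sigma> x)"
    using orbit_eq_range_funpow[OF assms] support_set[OF assms] by simp
  then show ?thesis using distinct_card[OF cycle_of_permutation[OF assms, of x]] by simp
qed

lemma funpow_eq_iff_cong_card_orbit: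
  assumes "permutation \<sigma>"
  shows "(\<sigma> ^^ a) x = (\<sigma> ^^ b) x \<longleftrightarrow> [a = b] (mod card (orbit \<sigma> x))"
proof -
  have inj: "inj \<sigma>" using assms permutation_bijective bij_is_inj by blast
  have *: "(\<sigma> ^^ a) x = (\<sigma> ^^ b) x \<longleftrightarrow> [b = a] (mod least_power \<sigma> x)" if "a \<le> b" for a b
  proof -
    have "(\<sigma> ^^ a) x = (\<sigma> ^^ b) x \<longleftrightarrow> (\<sigma> ^^ (b - a)) x = x"
      using funpow_diff[OF inj that] that by (metis funpow_add le_add_diff_inverse o_apply)
    also have "\<dots> \<longleftrightarrow> least_power \<sigma> x dvd (b - a)"
      using least_power_dvd[OF assms] by simp
    also have "\<dots> \<longleftrightarrow> [b = a] (mod least_power \<sigma> x)"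
      using cong_altdef_nat that by simp
    finally show ?thesis .
  qed
  show ?thesis
    unfolding card_orbit_eq_least_power[OF assms]
    using *[of a b] *[of b a] cong_sym_eq by (cases "a \<le> b") auto
qed

lemma orbit_subset_if_closed:
  assumes "w \<in> A" "\<forall>z\<in>A. \<sigma> z \<in> A"
  shows "orbit \<sigma> w \<subseteq> A"
proof
  fix v assume "v \<in> orbit \<sigma> w" then show "v \<in> A"
    by induct (use assms in auto)
qed

lemma orbit_disjoint_if_closed:
  assumes "permutation \<sigma>" "\<forall>z\<in>A. \<sigma> z \<in> A" "z \<notin> A"
  shows "orbit \<sigma> z \<inter> A = {}"
proof (rule ccontr)
  assume "orbit \<sigma> z \<inter> A \<noteq> {}"
  then obtain w where w: "w \<in> orbit \<sigma> z" "w \<in> A" by blast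
  have "z \<in> orbit \<sigma> w"
    using orbit_eq_of_mem[OF assms(1) w(1)] permutation_self_in_orbit[OF assms(1)] by metis
  then show False using orbit_subset_if_closed[OF w(2) assms(2)] assms(3) by blast
qed

lemma orbit_perm_restrict_compl:
  assumes "finite S" "\<sigma> permutes S" "\<forall>z\<in>A. \<sigma> z \<in> A" "z \<in> S - A"
  shows "orbit (perm_restrict \<sigma> (S - A)) z = orbit \<sigma> z"
proof (rule orbit_cong)
  have perm: "permutation \<sigma>" using permutes_imp_permutation[OF assms(1,2)] .
  show "z \<in> orbit \<sigma> z" using permutation_self_in_orbit[OF perm] .
  fix v assume "v \<in> orbit \<sigma> z"
  moreover have "orbit \<sigma> z \<subseteq> S" using permutes_orbit_subset[OF assms(2)] assms(4) by simp
  moreover have "orbit \<sigma> z \<inter> A = {}" using orbit_disjoint_if_closed[OF perm assms(3)] assms(4) by blast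
  ultimately show "perm_restrict \<sigma> (S - A) v = \<sigma> v" by (auto simp: perm_restrict_def)
qed

lemma image_eq_if_closed:
  assumes "finite A" "\<sigma> permutes S" "\<forall>z\<in>A. \<sigma> z \<in> A"
  shows "\<sigma> ` A = A"
  using endo_inj_surj[OF assms(1)] assms(3) permutes_inj[OF assms(2)]
  by (simp add: image_subset_iff inj_on_subset)

lemma perm_restrict_compl_permutes:
  assumes "f permutes S" "B \<subseteq> S" "f ` B = B"
  shows "perm_restrict f (S - B) permutes (S - B)"
proof (rule bij_imp_permutes)
  have inj: "inj f" using permutes_inj[OF assms(1)] .
  have "f ` (S - B) = S - B"
    using image_set_diff[OF inj, of S B] permutes_image[OF assms(1)] assms(3) by simp
  then have "bij_betw f (S - B) (S - B)"
    unfolding bij_betw_def using inj inj_on_subset by blast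
  then show "bij_betw (perm_restrict f (S - B)) (S - B) (S - B)"
    using bij_betw_cong[of "S - B" f "perm_restrict f (S - B)"] by (metis perm_restrict_simps(1))
qed (auto simp: perm_restrict_def)

lemma comp_permutes_disjoint_apply:
  assumes "\<rho> permutes A" "\<tau> permutes (S - A)"
  shows "(\<rho> \<circ> \<tau>) z = (if z \<in> A then \<rho> z else \<tau> z)"
proof (cases "z \<in> A")
  case False
  then have "\<tau> z \<notin> A"
    using permutes_in_image[OF assms(2)] permutes_not_in[OF assms(2)] by (cases "z \<in> S") auto
  then show ?thesis using False permutes_not_in[OF assms(1)] by simp
qed (use permutes_not_in[OF assms(2)] in simp)

lemma evenperm_cycle_of_list:
  assumes "distinct cs" "cs \<noteq> []"
  shows "evenperm (cycle_of_list cs) \<longleftrightarrow> odd (length cs)"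
  using assms
proof (induction cs rule: cycle_of_list.induct)
  case (1 i j cs)
  have "evenperm (transpose i j \<circ> cycle_of_list (j # cs)) \<longleftrightarrow>
        (evenperm (transpose i j) = evenperm (cycle_of_list (j # cs)))"
    by (rule evenperm_comp[OF permutation_swap_id permutation_of_cycle])
  moreover have "i \<noteq> j" using "1.prems" by auto
  moreover have "evenperm (cycle_of_list (j # cs)) \<longleftrightarrow> odd (length (j # cs))"
    using "1.IH" "1.prems" by simp
  ultimately have "evenperm (transpose i j \<circ> cycle_of_list (j # cs)) \<longleftrightarrow> odd (length (i # j # cs))"
    by (simp add: evenperm_swap)
  then show ?case by (metis cycle_of_list.simps(1))
qed simp_all

lemma evenperm_funpow:
  assumes "permutation p" "evenperm p"
  shows "evenperm (p ^^ h)"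
proof (induction h)
  case (Suc h)
  then show ?case
    using evenperm_comp[OF assms(1) permutation_funpow[OF assms(1), of h]] assms(2)
    by (metis funpow.simps(2))
qed simp

lemma funpow_commute: "(f ^^ a) ((f ^^ b) x) = (f ^^ b) ((f ^^ a) x)"
  by (metis funpow_add add.commute comp_apply)

lemma square_root_commute_funpow:
  assumes "\<tau> \<circ> \<tau> = \<sigma>"
  shows "\<tau> ((\<sigma> ^^ i) z) = (\<sigma> ^^ i) (\<tau> z)"
proof (induction i)
  case (Suc i)
  have "\<tau> (\<sigma> w) = \<sigma> (\<tau> w)" for w using assms by (metis comp_apply)
  then show ?case using Suc by simp
qed simp


definition orbits_of_card :: "'a set \<Rightarrow> ('a \<Rightarrow> 'a) \<Rightarrow> nat \<Rightarrow> 'a set set" where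
  "orbits_of_card S \<sigma> k = {orbit \<sigma> x | x. x \<in> S \<and> card (orbit \<sigma> x) = k}"

definition cycle_count :: "'a set \<Rightarrow> ('a \<Rightarrow> 'a) \<Rightarrow> nat \<Rightarrow> nat" where
  "cycle_count S \<sigma> k = card (orbits_of_card S \<sigma> k)"

lemma mem_orbits_of_card_iff:
  "B \<in> orbits_of_card S \<sigma> k \<longleftrightarrow> (\<exists>x. x \<in> S \<and> B = orbit \<sigma> x \<and> card B = k)"
  unfolding orbits_of_card_def by blast

lemma finite_orbits_of_card: "finite S \<Longrightarrow> finite (orbits_of_card S \<sigma> k)"
proof -
  have "orbits_of_card S \<sigma> k = orbit \<sigma> ` {x\<in>S. card (orbit \<sigma> x) = k}"
    unfolding orbits_of_card_def by auto
  then show "finite S \<Longrightarrow> ?thesis" by simp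
qed

lemma orbits_of_card_memD:
  assumes "finite S" "\<sigma> permutes S" "B \<in> orbits_of_card S \<sigma> k"
  shows "finite B" "card B = k" "B \<subseteq> S"
proof -
  obtain z where z: "z \<in> S" "B = orbit \<sigma> z" "card B = k"
    using assms(3) unfolding mem_orbits_of_card_iff by blast
  then show "B \<subseteq> S" using permutes_orbit_subset[OF assms(2)] by simp
  then show "finite B" using assms(1) finite_subset by blast
  show "card B = k" using z by simp
qed

lemma orbits_of_card_disjoint_iff:
  assumes "permutation \<sigma>" "B \<in> orbits_of_card S \<sigma> k"
  shows "B \<inter> orbit \<sigma> w = {} \<longleftrightarrow> B \<noteq> orbit \<sigma> w"
proof -
  obtain z where "B = orbit \<sigma> z" using assms(2) unfolding mem_orbits_of_card_iff by blast
  then show ?thesis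
    using permutation_self_in_orbit[OF assms(1), of w] orbits_disjoint[OF assms(1), of z w] by auto
qed

lemma orbits_of_card_perm_restrict_compl:
  assumes "finite S" "\<sigma> permutes S" "\<forall>z\<in>A. \<sigma> z \<in> A"
  shows "orbits_of_card (S - A) (perm_restrict \<sigma> (S - A)) k = {B \<in> orbits_of_card S \<sigma> k. B \<inter> A = {}}"
proof (intro set_eqI iffI)
  have perm: "permutation \<sigma>" using permutes_imp_permutation[OF assms(1,2)] .
  fix B
  assume "B \<in> orbits_of_card (S - A) (perm_restrict \<sigma> (S - A)) k"
  then obtain z where z: "z \<in> S - A" "B = orbit (perm_restrict \<sigma> (S - A)) z" "card B = k"
    unfolding mem_orbits_of_card_iff by blast
  then have "B = orbit \<sigma> z" using orbit_perm_restrict_compl[OF assms z(1)] by simp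
  then show "B \<in> {B \<in> orbits_of_card S \<sigma> k. B \<inter> A = {}}"
    using z orbit_disjoint_if_closed[OF perm assms(3)] unfolding mem_orbits_of_card_iff by blast
next
  have perm: "permutation \<sigma>" using permutes_imp_permutation[OF assms(1,2)] .
  fix B
  assume "B \<in> {B \<in> orbits_of_card S \<sigma> k. B \<inter> A = {}}"
  then obtain z where z: "z \<in> S" "B = orbit \<sigma> z" "card B = k" "B \<inter> A = {}"
    unfolding mem_orbits_of_card_iff by blast
  then have zA: "z \<in> S - A" using permutation_self_in_orbit[OF perm, of z] by blast
  then show "B \<in> orbits_of_card (S - A) (perm_restrict \<sigma> (S - A)) k"
    using z orbit_perm_restrict_compl[OF assms zA] unfolding mem_orbits_of_card_iff by metis
qed

section \<open>Signed counts of square roots\<close>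

definition square_roots :: "'a set \<Rightarrow> ('a \<Rightarrow> 'a) \<Rightarrow> ('a \<Rightarrow> 'a) set" where
  "square_roots S \<sigma> = {\<tau>. \<tau> permutes S \<and> \<tau> \<circ> \<tau> = \<sigma>}"

definition sign_weight :: "real \<Rightarrow> ('a \<Rightarrow> 'a) \<Rightarrow> real" where
  "sign_weight s \<tau> = (if evenperm \<tau> then 1 else s)"

definition signed_root_sum :: "real \<Rightarrow> 'a set \<Rightarrow> ('a \<Rightarrow> 'a) \<Rightarrow> real" where
  "signed_root_sum s S \<sigma> = (\<Sum>\<tau>\<in>square_roots S \<sigma>. sign_weight s \<tau>)"

lemma finite_square_roots: "finite S \<Longrightarrow> finite (square_roots S \<sigma>)"
  unfolding square_roots_def by (rule finite_subset[OF _ finite_permutations]) auto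

lemma signed_root_sum_eq_counts:
  assumes "finite S"
  shows "signed_root_sum s S \<sigma> = real (card {\<tau>. \<tau> permutes S \<and> \<tau> \<circ> \<tau> = \<sigma> \<and> evenperm \<tau>})
     + s * real (card {\<tau>. \<tau> permutes S \<and> \<tau> \<circ> \<tau> = \<sigma> \<and> \<not> evenperm \<tau>})"
proof -
  have "signed_root_sum s S \<sigma> = (\<Sum>\<tau>\<in>square_roots S \<sigma> \<inter> {\<tau>. evenperm \<tau>}. sign_weight s \<tau>)
      + (\<Sum>\<tau>\<in>square_roots S \<sigma> - {\<tau>. evenperm \<tau>}. sign_weight s \<tau>)"
    unfolding signed_root_sum_def by (rule sum.Int_Diff[OF finite_square_roots[OF assms]])
  also have "square_roots S \<sigma> \<inter> {\<tau>. evenperm \<tau>} = {\<tau>. \<tau> permutes S \<and> \<tau> \<circ> \<tau> = \<sigma> \<and> evenperm \<tau>}"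
    unfolding square_roots_def by blast
  also have "square_roots S \<sigma> - {\<tau>. evenperm \<tau>} = {\<tau>. \<tau> permutes S \<and> \<tau> \<circ> \<tau> = \<sigma> \<and> \<not> evenperm \<tau>}"
    unfolding square_roots_def by blast
  also have "(\<Sum>\<tau>\<in>{\<tau>. \<tau> permutes S \<and> \<tau> \<circ> \<tau> = \<sigma> \<and> evenperm \<tau>}. sign_weight s \<tau>)
      = (\<Sum>\<tau>\<in>{\<tau>. \<tau> permutes S \<and> \<tau> \<circ> \<tau> = \<sigma> \<and> evenperm \<tau>}. 1)"
    by (rule sum.cong) (auto simp: sign_weight_def)
  also have "(\<Sum>\<tau>\<in>{\<tau>. \<tau> permutes S \<and> \<tau> \<circ> \<tau> = \<sigma> \<and> \<not> evenperm \<tau>}. sign_weight s \<tau>)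
      = (\<Sum>\<tau>\<in>{\<tau>. \<tau> permutes S \<and> \<tau> \<circ> \<tau> = \<sigma> \<and> \<not> evenperm \<tau>}. s)"
    by (rule sum.cong) (auto simp: sign_weight_def)
  finally show ?thesis by (simp only: sum_constant mult_1_right mult.commute)
qed

text \<open>A square root of \<open>\<sigma>\<close> that agrees on a \<open>\<sigma>\<close>-closed set \<open>A\<close> with a square root \<open>\<rho>\<close> of
  \<open>\<sigma>|A\<close> is \<open>\<rho>\<close> composed with an arbitrary square root of \<open>\<sigma>\<close> restricted to \<open>S - A\<close>.\<close>

lemma sum_square_roots_extending:
  assumes fin: "finite S" and \<sigma>: "\<sigma> permutes S" and AS: "A \<subseteq> S" and Acl: "\<forall>z\<in>A. \<sigma> z \<in> A"
    and \<rho>: "\<rho> permutes A" and \<rho>\<sigma>: "\<forall>z\<in>A. \<rho> (\<rho> z) = \<sigma> z" and s: "s * s = 1"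
  shows "(\<Sum>\<tau>\<in>{\<tau>\<in>square_roots S \<sigma>. \<forall>z\<in>A. \<tau> z = \<rho> z}. sign_weight s \<tau>)
         = sign_weight s \<rho> * signed_root_sum s (S - A) (perm_restrict \<sigma> (S - A))"
proof -
  let ?T = "{\<tau>\<in>square_roots S \<sigma>. \<forall>z\<in>A. \<tau> z = \<rho> z}"
  let ?\<sigma>' = "perm_restrict \<sigma> (S - A)"
  have finA: "finite A" using AS fin finite_subset by blast
  have \<sigma>A: "\<sigma> ` A = A" using image_eq_if_closed[OF finA \<sigma> Acl] .
  have "signed_root_sum s (S - A) ?\<sigma>' * sign_weight s \<rho>
      = (\<Sum>\<tau>'\<in>square_roots (S - A) ?\<sigma>'. sign_weight s \<tau>' * sign_weight s \<rho>)"
    unfolding signed_root_sum_def by (simp add: sum_distrib_right)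
  also have "\<dots> = (\<Sum>\<tau>\<in>?T. sign_weight s \<tau>)"
  proof (rule sum.reindex_bij_witness[where j = "\<lambda>\<tau>'. \<rho> \<circ> \<tau>'" and i = "\<lambda>\<tau>. perm_restrict \<tau> (S - A)"])
    fix \<tau>' assume "\<tau>' \<in> square_roots (S - A) ?\<sigma>'"
    then have \<tau>': "\<tau>' permutes (S - A)" "\<tau>' \<circ> \<tau>' = ?\<sigma>'" unfolding square_roots_def by auto
    note comp = comp_permutes_disjoint_apply[OF \<rho> \<tau>'(1)]
    show "perm_restrict (\<rho> \<circ> \<tau>') (S - A) = \<tau>'"
      using comp permutes_not_in[OF \<tau>'(1)] by (auto simp: perm_restrict_def fun_eq_iff)
    have "(\<rho> \<circ> \<tau>') ((\<rho> \<circ> \<tau>') z) = \<sigma> z" for z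
    proof (cases "z \<in> A")
      case True
      then show ?thesis using comp \<rho>\<sigma> permutes_in_image[OF \<rho>] by simp
    next
      case False
      have "\<tau>' z \<notin> A"
        using False permutes_in_image[OF \<tau>'(1)] permutes_not_in[OF \<tau>'(1)] by (cases "z \<in> S") auto
      moreover have "\<tau>' (\<tau>' z) = ?\<sigma>' z" using \<tau>'(2) by (metis comp_apply)
      moreover have "\<sigma> z \<notin> A" using False \<sigma>A permutes_inj[OF \<sigma>] by (metis image_iff inj_eq)
      ultimately show ?thesis
        using False comp permutes_not_in[OF \<sigma>, of z] permutes_not_in[OF \<rho>]
        by (auto simp: perm_restrict_def)
    qed
    moreover have "\<rho> \<circ> \<tau>' permutes S"
      using permutes_compose[OF permutes_subset[OF \<tau>'(1)] permutes_subset[OF \<rho> AS]] by auto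
    ultimately show "\<rho> \<circ> \<tau>' \<in> ?T" using comp unfolding square_roots_def by (simp add: fun_eq_iff)
    have "evenperm (\<rho> \<circ> \<tau>') = (evenperm \<rho> = evenperm \<tau>')"
      using evenperm_comp permutes_imp_permutation[OF finA \<rho>] permutes_imp_permutation[OF _ \<tau>'(1)] fin
      by simp
    then show "sign_weight s (\<rho> \<circ> \<tau>') = sign_weight s \<tau>' * sign_weight s \<rho>"
      unfolding sign_weight_def using s by auto
  next
    fix \<tau> assume "\<tau> \<in> ?T"
    then have \<tau>: "\<tau> permutes S" "\<tau> \<circ> \<tau> = \<sigma>" "\<forall>z\<in>A. \<tau> z = \<rho> z" unfolding square_roots_def by auto
    have "\<tau> ` A = A" using \<tau>(3) permutes_image[OF \<rho>] by (auto simp: image_def)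
    then have pr: "perm_restrict \<tau> (S - A) permutes (S - A)"
      using perm_restrict_compl_permutes[OF \<tau>(1) AS] by blast
    show "\<rho> \<circ> perm_restrict \<tau> (S - A) = \<tau>"
      using comp_permutes_disjoint_apply[OF \<rho> pr] \<tau>(3) permutes_not_in[OF \<tau>(1)]
      by (auto simp: perm_restrict_def fun_eq_iff)
    have "\<tau> z \<in> S - A" if "z \<in> S - A" for z
      using that permutes_in_image[OF pr, of z] by (simp add: perm_restrict_def)
    then have "perm_restrict \<tau> (S - A) \<circ> perm_restrict \<tau> (S - A) = ?\<sigma>'"
      using \<tau>(2) by (auto simp: perm_restrict_def fun_eq_iff)
    then show "perm_restrict \<tau> (S - A) \<in> square_roots (S - A) ?\<sigma>'"
      unfolding square_roots_def using pr by simp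
  qed
  finally show ?thesis by (simp add: mult.commute)
qed

locale perm_orbit =
  fixes S :: "'a set" and \<sigma> :: "'a \<Rightarrow> 'a" and x :: 'a
  assumes finite_S: "finite S" and permutes_S: "\<sigma> permutes S" and x_in_S: "x \<in> S"
begin

abbreviation C where "C \<equiv> orbit \<sigma> x"
abbreviation k where "k \<equiv> card (orbit \<sigma> x)"

lemma is_permutation: "permutation \<sigma>"
  using permutes_imp_permutation[OF finite_S permutes_S] .

lemma card_orbit_pos: "k > 0"
  using card_orbit_eq_least_power[OF is_permutation] least_power_of_permutation(2)[OF is_permutation] by simp

lemma funpow_eq_iff_cong: "(\<sigma> ^^ a) x = (\<sigma> ^^ b) x \<longleftrightarrow> [a = b] (mod k)"
  using funpow_eq_iff_cong_card_orbit[OF is_permutation] .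

lemma funpow_card_orbit: "(\<sigma> ^^ k) x = x"
  using funpow_eq_iff_cong[of k 0] by (simp add: cong_def)

lemma orbit_subset: "C \<subseteq> S"
  using permutes_orbit_subset[OF permutes_S x_in_S] .

lemma mem_orbit: "x \<in> C"
  using permutation_self_in_orbit[OF is_permutation] .

lemma finite_orbit: "finite C"
  using orbit_subset finite_S finite_subset by blast

lemma mem_orbit_iff: "z \<in> C \<longleftrightarrow> (\<exists>i. z = (\<sigma> ^^ i) x)"
  using orbit_eq_range_funpow[OF is_permutation, of x] by auto

lemma orbit_closed: "\<forall>z\<in>C. \<sigma> z \<in> C"
  by (simp add: orbit.step)

lemma funpow_card_orbit_mem: "z \<in> C \<Longrightarrow> (\<sigma> ^^ k) z = z"
  unfolding mem_orbit_iff using funpow_commute funpow_card_orbit by metis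

lemma perm_restrict_orbit_eq_cycle: "perm_restrict \<sigma> C = cycle_of_list (support \<sigma> x)"
proof
  have set_support: "set (support \<sigma> x) = C"
    using support_set[OF is_permutation] orbit_eq_range_funpow[OF is_permutation] by simp
  fix z show "perm_restrict \<sigma> C z = cycle_of_list (support \<sigma> x) z"
    using cycle_restrict[OF is_permutation, of z x] id_outside_supp[of z "support \<sigma> x"] set_support
    by (cases "z \<in> C") (simp_all add: perm_restrict_def)
qed

lemma perm_restrict_orbit_permutes: "perm_restrict \<sigma> C permutes C"
  using cycle_permutes[of "support \<sigma> x"] perm_restrict_orbit_eq_cycle
    support_set[OF is_permutation] orbit_eq_range_funpow[OF is_permutation] by simp

lemma evenperm_perm_restrict_orbit: "evenperm (perm_restrict \<sigma> C) \<longleftrightarrow> odd k"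
proof -
  have "length (support \<sigma> x) = k" "support \<sigma> x \<noteq> []"
    using card_orbit_eq_least_power[OF is_permutation] card_orbit_pos by simp_all
  then show ?thesis
    using evenperm_cycle_of_list[OF cycle_of_permutation[OF is_permutation, of x]]
      perm_restrict_orbit_eq_cycle by simp
qed

lemma funpow_perm_restrict_orbit: "z \<in> C \<Longrightarrow> (perm_restrict \<sigma> C ^^ m) z = (\<sigma> ^^ m) z"
  by (induction m) (simp_all add: perm_restrict_def funpow_in_orbit)

text \<open>When \<open>k\<close> is odd, \<open>\<sigma>^((k+1)/2)\<close> squares to \<open>\<sigma>^(k+1) = \<sigma>\<close> on the cycle.\<close>

definition half_root :: "'a \<Rightarrow> 'a" where
  "half_root = perm_restrict \<sigma> C ^^ ((k + 1) div 2)"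

lemma half_root_permutes: "half_root permutes C"
  unfolding half_root_def using permutes_funpow[OF perm_restrict_orbit_permutes] .

lemma evenperm_half_root: "odd k \<Longrightarrow> evenperm half_root"
  unfolding half_root_def
  by (rule evenperm_funpow[OF permutes_imp_permutation[OF finite_orbit perm_restrict_orbit_permutes]])
    (simp add: evenperm_perm_restrict_orbit)

lemma half_root_apply: "z \<in> C \<Longrightarrow> half_root z = (\<sigma> ^^ ((k + 1) div 2)) z"
  unfolding half_root_def using funpow_perm_restrict_orbit by simp

lemma half_root_square:
  assumes "odd k" "z \<in> C"
  shows "half_root (half_root z) = \<sigma> z"
proof -
  have "(k + 1) div 2 + (k + 1) div 2 = k + 1" using assms(1) by (auto elim!: oddE)
  then have "half_root (half_root z) = (\<sigma> ^^ (k + 1)) z"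
    using half_root_apply[OF funpow_in_orbit[OF assms(2)]] half_root_apply[OF assms(2)]
    by (metis funpow_add comp_apply)
  also have "\<dots> = \<sigma> z" using funpow_card_orbit_mem[OF assms(2)] by (simp add: funpow_swap1)
  finally show ?thesis .
qed

text \<open>A square root mapping \<open>x\<close> into its own cycle sends \<open>x\<close> to some \<open>\<sigma>^j x\<close> with
  \<open>2j \<equiv> 1 (mod k)\<close>; this forces \<open>k\<close> odd and \<open>j \<equiv> (k+1)/2\<close>.\<close>

lemma square_roots_into_orbit:
  "{\<tau> \<in> square_roots S \<sigma>. \<tau> x \<in> C} =
     (if odd k then {\<tau> \<in> square_roots S \<sigma>. \<forall>z\<in>C. \<tau> z = half_root z} else {})"
proof -
  have "odd k \<and> (\<forall>z\<in>C. \<tau> z = half_root z)" if \<tau>: "\<tau> \<in> square_roots S \<sigma>" "\<tau> x \<in> C" for \<tau>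
  proof -
    have tt: "\<tau> \<circ> \<tau> = \<sigma>" using \<tau>(1) unfolding square_roots_def by simp
    obtain j where j: "\<tau> x = (\<sigma> ^^ j) x" using \<tau>(2) mem_orbit_iff by blast
    have "(\<sigma> ^^ 1) x = \<tau> (\<tau> x)" unfolding tt[symmetric] by simp
    also have "\<dots> = (\<sigma> ^^ (j + j)) x"
      using square_root_commute_funpow[OF tt, of j x] j by (simp add: funpow_add)
    finally have c1: "[1 = j + j] (mod k)" using funpow_eq_iff_cong by blast
    have odd: "odd k"
    proof
      assume "even k"
      then have "[1 = j + j] (mod 2)" using cong_dvd_modulus_nat[OF c1] by auto
      then show False by (simp add: cong_def)
    qed
    then have "(k + 1) div 2 + (k + 1) div 2 = k + 1" by (auto elim!: oddE)
    then have "[(k + 1) div 2 + (k + 1) div 2 = 1] (mod k)"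
      unfolding cong_def by (simp only: mod_add_self1)
    then have "[2 * j = 2 * ((k + 1) div 2)] (mod k)"
      using c1 cong_sym cong_trans mult_2 by metis
    moreover have "coprime 2 k" using odd by simp
    ultimately have "[j = (k + 1) div 2] (mod k)" using cong_mult_lcancel_nat by blast
    then have jh: "\<tau> x = (\<sigma> ^^ ((k + 1) div 2)) x" using j funpow_eq_iff_cong by simp
    have "\<tau> z = half_root z" if "z \<in> C" for z
    proof -
      obtain i where i: "z = (\<sigma> ^^ i) x" using \<open>z \<in> C\<close> mem_orbit_iff by blast
      then have "\<tau> z = (\<sigma> ^^ ((k + 1) div 2)) z"
        using square_root_commute_funpow[OF tt] jh funpow_commute by metis
      then show ?thesis using half_root_apply[OF that] by simp
    qed
    with odd show ?thesis by blast
  qed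
  moreover have "\<tau> x \<in> C" if "\<forall>z\<in>C. \<tau> z = half_root z" for \<tau>
    using that mem_orbit permutes_in_image[OF half_root_permutes] by simp
  ultimately show ?thesis by auto
qed

lemma sum_square_roots_into_orbit:
  assumes "s * s = 1"
  shows "(\<Sum>\<tau>\<in>{\<tau> \<in> square_roots S \<sigma>. \<tau> x \<in> C}. sign_weight s \<tau>)
       = (if odd k then signed_root_sum s (S - C) (perm_restrict \<sigma> (S - C)) else 0)"
proof (cases "odd k")
  case True
  have "(\<Sum>\<tau>\<in>{\<tau> \<in> square_roots S \<sigma>. \<tau> x \<in> C}. sign_weight s \<tau>)
      = (\<Sum>\<tau>\<in>{\<tau> \<in> square_roots S \<sigma>. \<forall>z\<in>C. \<tau> z = half_root z}. sign_weight s \<tau>)"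
    using square_roots_into_orbit True by simp
  also have "\<dots> = sign_weight s half_root * signed_root_sum s (S - C) (perm_restrict \<sigma> (S - C))"
    by (rule sum_square_roots_extending[OF finite_S permutes_S orbit_subset orbit_closed
          half_root_permutes]) (use half_root_square True assms in auto)
  finally show ?thesis using evenperm_half_root True by (simp add: sign_weight_def)
qed (simp add: square_roots_into_orbit)

lemma orbit_mem_orbits_of_card: "C \<in> orbits_of_card S \<sigma> k"
  unfolding mem_orbits_of_card_iff using x_in_S by blast

lemma cycle_count_remove_orbit:
  "cycle_count (S - C) (perm_restrict \<sigma> (S - C)) j = cycle_count S \<sigma> j - (if j = k then 1 else 0)"
proof -
  have "orbits_of_card (S - C) (perm_restrict \<sigma> (S - C)) j = orbits_of_card S \<sigma> j - {C}"
    using orbits_of_card_perm_restrict_compl[OF finite_S permutes_S orbit_closed, of j]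
      orbits_of_card_disjoint_iff[OF is_permutation, of _ S j x] by auto
  moreover have "C \<in> orbits_of_card S \<sigma> j \<longleftrightarrow> j = k"
    using orbit_mem_orbits_of_card orbits_of_card_memD(2)[OF finite_S permutes_S] by blast
  ultimately show ?thesis unfolding cycle_count_def by (simp add: card_Diff_singleton_if)
qed

definition same_length_points :: "'a set" where
  "same_length_points = {y \<in> S - C. card (orbit \<sigma> y) = k}"

lemma same_length_points_eq_Union:
  "same_length_points = \<Union>(orbits_of_card S \<sigma> k - {C})"
proof (intro set_eqI iffI)
  fix y assume "y \<in> same_length_points"
  then have y: "y \<in> S" "y \<notin> C" "card (orbit \<sigma> y) = k" unfolding same_length_points_def by auto
  then have "orbit \<sigma> y \<in> orbits_of_card S \<sigma> k" unfolding mem_orbits_of_card_iff by blast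
  with y(2) show "y \<in> \<Union>(orbits_of_card S \<sigma> k - {C})"
    using permutation_self_in_orbit[OF is_permutation, of y] by blast
next
  fix y assume "y \<in> \<Union>(orbits_of_card S \<sigma> k - {C})"
  then obtain B where B: "B \<in> orbits_of_card S \<sigma> k" "B \<noteq> C" "y \<in> B" by blast
  then obtain z where "B = orbit \<sigma> z" "card B = k" unfolding mem_orbits_of_card_iff by blast
  moreover have "y \<in> S" using orbits_of_card_memD(3)[OF finite_S permutes_S B(1)] B(3) by blast
  moreover have "y \<notin> C" using orbits_of_card_disjoint_iff[OF is_permutation B(1), of x] B by blast
  ultimately show "y \<in> same_length_points"
    unfolding same_length_points_def using orbit_eq_of_mem[OF is_permutation] B(3) by simp
qed

lemma card_same_length_points: "card same_length_points = k * (cycle_count S \<sigma> k - 1)"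
proof -
  note memD = orbits_of_card_memD[OF finite_S permutes_S]
  have "card same_length_points = sum card (orbits_of_card S \<sigma> k - {C})"
    unfolding same_length_points_eq_Union
  proof (rule card_Union_disjoint)
    show "pairwise disjnt (orbits_of_card S \<sigma> k - {C})"
      unfolding pairwise_def disjnt_def
    proof (intro ballI impI)
      fix A B
      assume A: "A \<in> orbits_of_card S \<sigma> k - {C}" and B: "B \<in> orbits_of_card S \<sigma> k - {C}" and "A \<noteq> B"
      moreover obtain w where "B = orbit \<sigma> w"
        using DiffD1[OF B] unfolding mem_orbits_of_card_iff by blast
      ultimately show "A \<inter> B = {}" using orbits_of_card_disjoint_iff[OF is_permutation DiffD1[OF A]] by blast
    qed
  qed (use memD in blast)
  also have "\<dots> = (\<Sum>B\<in>orbits_of_card S \<sigma> k - {C}. k)"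
    by (rule sum.cong) (use memD(2) in auto)
  also have "\<dots> = k * card (orbits_of_card S \<sigma> k - {C})" by simp
  also have "card (orbits_of_card S \<sigma> k - {C}) = cycle_count S \<sigma> k - 1"
    unfolding cycle_count_def using orbit_mem_orbits_of_card by (simp add: card_Diff_singleton_if)
  finally show ?thesis .
qed

lemma square_root_outside_orbit:
  assumes "\<tau> \<in> square_roots S \<sigma>" "\<tau> x \<notin> C"
  shows "\<tau> x \<in> same_length_points"
proof -
  have \<tau>: "\<tau> permutes S" "\<tau> \<circ> \<tau> = \<sigma>" using assms(1) unfolding square_roots_def by auto
  have "orbit \<sigma> (\<tau> x) = range (\<lambda>i. (\<sigma> ^^ i) (\<tau> x))" using orbit_eq_range_funpow[OF is_permutation] .
  also have "\<dots> = \<tau> ` C"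
    using orbit_eq_range_funpow[OF is_permutation, of x] square_root_commute_funpow[OF \<tau>(2)]
    by (simp add: image_image)
  finally have "card (orbit \<sigma> (\<tau> x)) = k"
    using card_image[OF inj_on_subset[OF permutes_inj[OF \<tau>(1)]]] by simp
  then show ?thesis
    unfolding same_length_points_def using assms(2) permutes_in_image[OF \<tau>(1)] x_in_S by simp
qed

end

text \<open>A square root mapping \<open>x\<close> to a point \<open>y\<close> of another cycle of the same length \<open>k\<close> is
  forced on both cycles: it is the \<open>2k\<close>-cycle \<open>(x y \<sigma>x \<sigma>y \<sigma>\<^sup>2x \<dots>)\<close>.\<close>

locale perm_orbit_pair = perm_orbit +
  fixes y :: 'a
  assumes y_in_S: "y \<in> S" and y_notin_orbit: "y \<notin> orbit \<sigma> x"
    and card_orbit_y: "card (orbit \<sigma> y) = card (orbit \<sigma> x)"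
begin

abbreviation D where "D \<equiv> orbit \<sigma> y"

lemma orbits_disjoint_pair: "C \<inter> D = {}"
  using orbits_disjoint[OF is_permutation] y_notin_orbit permutation_self_in_orbit[OF is_permutation, of y]
  by blast

lemma funpow_eq_iff_cong_y: "(\<sigma> ^^ a) y = (\<sigma> ^^ b) y \<longleftrightarrow> [a = b] (mod k)"
  using funpow_eq_iff_cong_card_orbit[OF is_permutation] card_orbit_y by simp

lemma funpow_card_orbit_y: "(\<sigma> ^^ k) y = y"
  using funpow_eq_iff_cong_y[of k 0] by (simp add: cong_def)

lemma mem_orbit_y_iff: "z \<in> D \<longleftrightarrow> (\<exists>i. z = (\<sigma> ^^ i) y)"
  using orbit_eq_range_funpow[OF is_permutation, of y] by auto

lemma orbits_pair_subset: "C \<union> D \<subseteq> S"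
  using orbit_subset permutes_orbit_subset[OF permutes_S y_in_S] by simp

lemma orbits_pair_closed: "\<forall>z\<in>C \<union> D. \<sigma> z \<in> C \<union> D"
  by (auto intro: orbit.step)

definition interleaving :: "'a list" where
  "interleaving = map (\<lambda>j. if even j then (\<sigma> ^^ (j div 2)) x else (\<sigma> ^^ (j div 2)) y) [0..<2*k]"

lemma length_interleaving: "length interleaving = 2 * k"
  unfolding interleaving_def by simp

lemma nth_interleaving:
  "j < 2 * k \<Longrightarrow> interleaving ! j = (if even j then (\<sigma> ^^ (j div 2)) x else (\<sigma> ^^ (j div 2)) y)"
  unfolding interleaving_def by simp

lemma distinct_interleaving: "distinct interleaving"
proof -
  have "inj_on (\<lambda>j. if even j then (\<sigma> ^^ (j div 2)) x else (\<sigma> ^^ (j div 2)) y) {0..<2*k}"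
  proof (rule inj_onI)
    fix a b assume a: "a \<in> {0..<2*k}" and b: "b \<in> {0..<2*k}"
      and eq: "(if even a then (\<sigma> ^^ (a div 2)) x else (\<sigma> ^^ (a div 2)) y) =
               (if even b then (\<sigma> ^^ (b div 2)) x else (\<sigma> ^^ (b div 2)) y)"
    have par: "even a = even b"
    proof (rule ccontr)
      assume "even a \<noteq> even b"
      then have "(\<sigma> ^^ (a div 2)) x = (\<sigma> ^^ (b div 2)) y \<or> (\<sigma> ^^ (b div 2)) x = (\<sigma> ^^ (a div 2)) y"
        using eq by (auto split: if_splits)
      moreover have "(\<sigma> ^^ i) x \<in> C" "(\<sigma> ^^ i) y \<in> D" for i
        using mem_orbit_iff mem_orbit_y_iff by auto
      ultimately show False using orbits_disjoint_pair by (metis disjoint_iff)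
    qed
    then have "[a div 2 = b div 2] (mod k)"
      using eq funpow_eq_iff_cong funpow_eq_iff_cong_y by (auto split: if_splits)
    then have "a div 2 = b div 2" using cong_less_modulus_unique_nat a b by auto
    then show "a = b" using par by (metis div_mult_mod_eq mod2_eq_if)
  qed
  then show ?thesis unfolding interleaving_def by (simp add: distinct_map)
qed

lemma set_interleaving: "set interleaving = C \<union> D"
proof
  show "set interleaving \<subseteq> C \<union> D"
    unfolding interleaving_def using mem_orbit_iff mem_orbit_y_iff by auto
  have i: "2 * (i mod k) < 2 * k" "2 * (i mod k) + 1 < 2 * k" for i
  proof -
    have "i mod k < k" using card_orbit_pos by simp
    then show "2 * (i mod k) < 2 * k" "2 * (i mod k) + 1 < 2 * k" by linarith+
  qed
  have "interleaving ! (2 * (i mod k)) = (\<sigma> ^^ i) x" for i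
    using nth_interleaving[OF i(1)] funpow_mod_eq[OF funpow_card_orbit] by simp
  moreover have "interleaving ! (2 * (i mod k) + 1) = (\<sigma> ^^ i) y" for i
    using nth_interleaving[OF i(2)] funpow_mod_eq[OF funpow_card_orbit_y] by simp
  ultimately have "(\<sigma> ^^ i) x \<in> set interleaving" "(\<sigma> ^^ i) y \<in> set interleaving" for i
    using i length_interleaving by (metis nth_mem)+
  then show "C \<union> D \<subseteq> set interleaving" using mem_orbit_iff mem_orbit_y_iff by auto
qed

definition interleaving_root :: "'a \<Rightarrow> 'a" where
  "interleaving_root = cycle_of_list interleaving"

lemma interleaving_root_permutes: "interleaving_root permutes (C \<union> D)"
  unfolding interleaving_root_def using cycle_permutes[of interleaving] set_interleaving by simp

lemma odd_interleaving_root: "\<not> evenperm interleaving_root"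
proof -
  have "interleaving \<noteq> []" using length_interleaving card_orbit_pos by auto
  then show ?thesis
    unfolding interleaving_root_def
    using evenperm_cycle_of_list[OF distinct_interleaving] length_interleaving by simp
qed

lemma interleaving_root_nth:
  assumes "j < 2 * k"
  shows "interleaving_root (interleaving ! j) = interleaving ! ((1 + j) mod (2 * k))"
proof -
  have "map interleaving_root interleaving = rotate 1 interleaving"
    unfolding interleaving_root_def using cyclic_rotation[OF distinct_interleaving, of 1] by simp
  then have "interleaving_root (interleaving ! j) = rotate 1 interleaving ! j"
    using assms length_interleaving by (metis nth_map)
  also have "\<dots> = interleaving ! ((1 + j) mod (2 * k))"
    using nth_rotate[of j interleaving 1] assms length_interleaving by simp
  finally show ?thesis .
qed

lemma interleaving_root_x: "interleaving_root ((\<sigma> ^^ i) x) = (\<sigma> ^^ i) y"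
proof -
  let ?a = "i mod k"
  have a: "?a < k" using card_orbit_pos by simp
  have "(\<sigma> ^^ i) x = interleaving ! (2 * ?a)"
    using nth_interleaving[of "2 * ?a"] a funpow_mod_eq[OF funpow_card_orbit] by simp
  moreover have "(1 + 2 * ?a) mod (2 * k) = 2 * ?a + 1" using a by simp
  ultimately have "interleaving_root ((\<sigma> ^^ i) x) = interleaving ! (2 * ?a + 1)"
    using interleaving_root_nth[of "2 * ?a"] a by simp
  also have "\<dots> = (\<sigma> ^^ i) y"
    using nth_interleaving[of "2 * ?a + 1"] a funpow_mod_eq[OF funpow_card_orbit_y] by simp
  finally show ?thesis .
qed

lemma interleaving_root_y: "interleaving_root ((\<sigma> ^^ i) y) = (\<sigma> ^^ Suc i) x"
proof -
  let ?a = "i mod k"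
  have a: "?a < k" "2 * ((?a + 1) mod k) < 2 * k" using card_orbit_pos by simp_all
  have "(\<sigma> ^^ i) y = interleaving ! (2 * ?a + 1)"
    using nth_interleaving[of "2 * ?a + 1"] a funpow_mod_eq[OF funpow_card_orbit_y] by simp
  moreover have "(1 + (2 * ?a + 1)) mod (2 * k) = 2 * ((?a + 1) mod k)"
    using mult_mod_right[of 2 "?a + 1" k] by simp
  ultimately have "interleaving_root ((\<sigma> ^^ i) y) = interleaving ! (2 * ((?a + 1) mod k))"
    using interleaving_root_nth[of "2 * ?a + 1"] a by simp
  also have "\<dots> = (\<sigma> ^^ ((?a + 1) mod k)) x" using nth_interleaving a(2) by simp
  also have "\<dots> = (\<sigma> ^^ Suc i) x"
  proof -
    have "[(?a + 1) mod k = Suc i] (mod k)" by (simp add: cong_def mod_Suc_eq)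
    then show ?thesis using funpow_eq_iff_cong by blast
  qed
  finally show ?thesis .
qed

lemma interleaving_root_square:
  assumes "z \<in> C \<union> D"
  shows "interleaving_root (interleaving_root z) = \<sigma> z"
  using assms unfolding Un_iff mem_orbit_iff mem_orbit_y_iff
proof (elim disjE exE)
  fix i assume "z = (\<sigma> ^^ i) x"
  then show ?thesis using interleaving_root_x interleaving_root_y by simp
next
  fix i assume "z = (\<sigma> ^^ i) y"
  then show ?thesis using interleaving_root_x interleaving_root_y by (simp del: funpow.simps) simp
qed

lemma square_roots_mapping_to:
  "{\<tau> \<in> square_roots S \<sigma>. \<tau> x = y} =
     {\<tau> \<in> square_roots S \<sigma>. \<forall>z\<in>C \<union> D. \<tau> z = interleaving_root z}"
proof -
  have "\<tau> z = interleaving_root z"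
    if \<tau>: "\<tau> \<in> square_roots S \<sigma>" "\<tau> x = y" and z: "z \<in> C \<union> D" for \<tau> z
  proof -
    have tt: "\<tau> \<circ> \<tau> = \<sigma>" using \<tau>(1) unfolding square_roots_def by simp
    note commute = square_root_commute_funpow[OF tt]
    show ?thesis using z unfolding Un_iff mem_orbit_iff mem_orbit_y_iff
    proof (elim disjE exE)
      fix i assume "z = (\<sigma> ^^ i) x"
      then show ?thesis using commute[of i x] \<tau>(2) interleaving_root_x by simp
    next
      fix i assume i: "z = (\<sigma> ^^ i) y"
      have "\<tau> z = \<tau> (\<tau> ((\<sigma> ^^ i) x))" using commute[of i x] \<tau>(2) i by simp
      also have "\<dots> = \<sigma> ((\<sigma> ^^ i) x)" using tt by (metis comp_apply)
      finally show ?thesis using i interleaving_root_y by simp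
    qed
  qed
  moreover have "\<tau> x = y" if "\<forall>z\<in>C \<union> D. \<tau> z = interleaving_root z" for \<tau>
    using that mem_orbit interleaving_root_x[of 0] by simp
  ultimately show ?thesis by blast
qed

lemma sum_square_roots_mapping_to:
  assumes "s * s = 1"
  shows "(\<Sum>\<tau>\<in>{\<tau> \<in> square_roots S \<sigma>. \<tau> x = y}. sign_weight s \<tau>)
       = s * signed_root_sum s (S - (C \<union> D)) (perm_restrict \<sigma> (S - (C \<union> D)))"
  unfolding square_roots_mapping_to
  using sum_square_roots_extending[OF finite_S permutes_S orbits_pair_subset orbits_pair_closed
      interleaving_root_permutes] interleaving_root_square assms odd_interleaving_root
  by (simp add: sign_weight_def)

lemma cycle_count_remove_orbit_pair:
  "cycle_count (S - (C \<union> D)) (perm_restrict \<sigma> (S - (C \<union> D))) j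
     = cycle_count S \<sigma> j - (if j = k then 2 else 0)"
proof -
  note memD = orbits_of_card_memD[OF finite_S permutes_S]
  have "C \<noteq> D" using y_notin_orbit permutation_self_in_orbit[OF is_permutation, of y] by auto
  have "B \<inter> (C \<union> D) = {} \<longleftrightarrow> B \<noteq> C \<and> B \<noteq> D" if "B \<in> orbits_of_card S \<sigma> j" for B
    using orbits_of_card_disjoint_iff[OF is_permutation that, of x]
      orbits_of_card_disjoint_iff[OF is_permutation that, of y] by blast
  then have "orbits_of_card (S - (C \<union> D)) (perm_restrict \<sigma> (S - (C \<union> D))) j
      = orbits_of_card S \<sigma> j - {C, D}"
    unfolding orbits_of_card_perm_restrict_compl[OF finite_S permutes_S orbits_pair_closed] by blast
  moreover have "orbits_of_card S \<sigma> j \<inter> {C, D} = (if j = k then {C, D} else {})"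
  proof (cases "j = k")
    case True
    have "D \<in> orbits_of_card S \<sigma> k" unfolding mem_orbits_of_card_iff using y_in_S card_orbit_y by blast
    then show ?thesis using True orbit_mem_orbits_of_card by auto
  next
    case False
    then have "C \<notin> orbits_of_card S \<sigma> j" "D \<notin> orbits_of_card S \<sigma> j"
      using memD(2)[of C j] memD(2)[of D j] card_orbit_y by auto
    then show ?thesis using False by auto
  qed
  moreover have "card (orbits_of_card S \<sigma> j - {C, D})
      = cycle_count S \<sigma> j - card (orbits_of_card S \<sigma> j \<inter> {C, D})"
    unfolding cycle_count_def by (rule card_Diff_subset_Int) simp
  ultimately show ?thesis using \<open>C \<noteq> D\<close> unfolding cycle_count_def by (simp add: numeral_2_eq_2)
qed

end

context perm_orbit
begin

lemma signed_root_sum_split: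
  assumes "s * s = 1"
  shows "signed_root_sum s S \<sigma>
    = (if odd k then signed_root_sum s (S - C) (perm_restrict \<sigma> (S - C)) else 0)
      + (\<Sum>y\<in>same_length_points.
           s * signed_root_sum s (S - (C \<union> orbit \<sigma> y)) (perm_restrict \<sigma> (S - (C \<union> orbit \<sigma> y))))"
proof -
  let ?R = "square_roots S \<sigma>" and ?w = "sign_weight s"
  have finR: "finite ?R" using finite_square_roots[OF finite_S] .
  have "signed_root_sum s S \<sigma> = sum ?w (?R \<inter> {\<tau>. \<tau> x \<in> C}) + sum ?w (?R - {\<tau>. \<tau> x \<in> C})"
    unfolding signed_root_sum_def by (rule sum.Int_Diff[OF finR])
  also have "?R \<inter> {\<tau>. \<tau> x \<in> C} = {\<tau> \<in> ?R. \<tau> x \<in> C}" by blast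
  also have "sum ?w {\<tau> \<in> ?R. \<tau> x \<in> C}
      = (if odd k then signed_root_sum s (S - C) (perm_restrict \<sigma> (S - C)) else 0)"
    using sum_square_roots_into_orbit[OF assms] .
  also have "sum ?w (?R - {\<tau>. \<tau> x \<in> C})
      = (\<Sum>y\<in>same_length_points. sum ?w {\<tau>. \<tau> \<in> ?R - {\<tau>. \<tau> x \<in> C} \<and> \<tau> x = y})"
    by (rule sum.group[symmetric])
      (use finR finite_S square_root_outside_orbit in \<open>auto simp: same_length_points_def\<close>)
  also have "\<dots> = (\<Sum>y\<in>same_length_points.
      s * signed_root_sum s (S - (C \<union> orbit \<sigma> y)) (perm_restrict \<sigma> (S - (C \<union> orbit \<sigma> y))))"
  proof (rule sum.cong[OF refl])
    fix y assume y: "y \<in> same_length_points"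
    interpret perm_orbit_pair S \<sigma> x y using y by unfold_locales (auto simp: same_length_points_def)
    have "{\<tau>. \<tau> \<in> ?R - {\<tau>. \<tau> x \<in> C} \<and> \<tau> x = y} = {\<tau> \<in> ?R. \<tau> x = y}"
      using y_notin_orbit by auto
    then show "sum ?w {\<tau>. \<tau> \<in> ?R - {\<tau>. \<tau> x \<in> C} \<and> \<tau> x = y}
        = s * signed_root_sum s (S - (C \<union> D)) (perm_restrict \<sigma> (S - (C \<union> D)))"
      using sum_square_roots_mapping_to[OF assms] by simp
  qed
  finally show ?thesis .
qed

end

text \<open>\<open>cycle_root_weight s k m\<close> is the signed count of square roots of a product of \<open>m\<close>
  disjoint \<open>k\<close>-cycles: the first cycle is either squared into itself (possible only for odd \<open>k\<close>)
  or paired with one of the other \<open>k (m - 1)\<close> points of the remaining cycles.\<close>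

fun cycle_root_weight :: "real \<Rightarrow> nat \<Rightarrow> nat \<Rightarrow> real" where
  "cycle_root_weight s k 0 = 1"
| "cycle_root_weight s k (Suc 0) = (if odd k then 1 else 0)"
| "cycle_root_weight s k (Suc (Suc m)) =
     (if odd k then cycle_root_weight s k (Suc m) else 0)
     + s * real k * real (Suc m) * cycle_root_weight s k m"

lemma cycle_root_weight_step:
  assumes "m \<ge> 1"
  shows "cycle_root_weight s k m = (if odd k then cycle_root_weight s k (m - 1) else 0)
           + s * real k * real (m - 1) * cycle_root_weight s k (m - 2)"
  using assms by (induction s k m rule: cycle_root_weight.induct) auto

lemma prod_remove_decreased:
  fixes c c' :: "'a \<Rightarrow> nat"
  assumes "finite I" "k \<in> I" "\<And>j. c' j = c j - (if j = k then a else 0)"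
  shows "(\<Prod>i\<in>I. f i (c' i)) = f k (c k - a) * (\<Prod>i\<in>I - {k}. f i (c i))"
proof -
  have "(\<Prod>i\<in>I - {k}. f i (c' i)) = (\<Prod>i\<in>I - {k}. f i (c i))"
    by (rule prod.cong) (simp_all add: assms(3))
  then show ?thesis using prod.remove[OF assms(1,2), of "\<lambda>i. f i (c' i)"] assms(3) by simp
qed

theorem signed_root_sum_eq_prod:
  assumes "finite S" "\<sigma> permutes S" "s * s = 1" "card S \<le> N"
  shows "signed_root_sum s S \<sigma> = (\<Prod>i\<in>{1..N}. cycle_root_weight s i (cycle_count S \<sigma> i))"
  using assms
proof (induction "card S" arbitrary: S \<sigma> rule: less_induct)
  case less
  note fin = less.prems(1) and perm = less.prems(2) and s = less.prems(3) and N = less.prems(4)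
  show ?case
  proof (cases "S = {}")
    case True
    then have "square_roots S \<sigma> = {id}" using perm unfolding square_roots_def by auto
    moreover have "cycle_count S \<sigma> i = 0" for i
      unfolding cycle_count_def orbits_of_card_def using True by simp
    ultimately show ?thesis unfolding signed_root_sum_def sign_weight_def by simp
  next
    case False
    then obtain x where xS: "x \<in> S" by blast
    interpret perm_orbit S \<sigma> x using fin perm xS by unfold_locales
    let ?c = "cycle_count S \<sigma>"
    let ?G = "\<lambda>a. cycle_root_weight s k (?c k - a) * (\<Prod>i\<in>{1..N} - {k}. cycle_root_weight s i (?c i))"
    have kN: "k \<in> {1..N}" using card_orbit_pos card_mono[OF fin orbit_subset] N by simp
    have ck: "?c k \<ge> 1"
      using orbit_mem_orbits_of_card finite_orbits_of_card[OF fin]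
      unfolding cycle_count_def by (metis card_0_eq empty_iff less_one not_le)
    have IH: "signed_root_sum s (S - B) (perm_restrict \<sigma> (S - B)) = ?G a"
      if "x \<in> B" "B \<subseteq> S" "finite B" "\<forall>z\<in>B. \<sigma> z \<in> B"
        "\<And>j. cycle_count (S - B) (perm_restrict \<sigma> (S - B)) j = ?c j - (if j = k then a else 0)"
      for B a
    proof -
      have "S - B \<subset> S" using that(1,2) xS by blast
      then have lt: "card (S - B) < card S" by (rule psubset_card_mono[OF fin])
      have perm': "perm_restrict \<sigma> (S - B) permutes (S - B)"
        using perm_restrict_compl_permutes[OF perm that(2) image_eq_if_closed[OF that(3) perm that(4)]] .
      have "signed_root_sum s (S - B) (perm_restrict \<sigma> (S - B))
          = (\<Prod>i\<in>{1..N}. cycle_root_weight s i (cycle_count (S - B) (perm_restrict \<sigma> (S - B)) i))"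
        using less.hyps[OF lt _ perm' s] fin N lt by simp
      also have "\<dots> = ?G a"
        by (rule prod_remove_decreased[OF _ kN that(5), where f = "cycle_root_weight s"]) simp
      finally show ?thesis .
    qed
    have "signed_root_sum s S \<sigma> = (if odd k then ?G 1 else 0) + real (card same_length_points) * s * ?G 2"
    proof -
      have "signed_root_sum s (S - (C \<union> orbit \<sigma> y)) (perm_restrict \<sigma> (S - (C \<union> orbit \<sigma> y))) = ?G 2"
        if "y \<in> same_length_points" for y
      proof -
        interpret perm_orbit_pair S \<sigma> x y using that by unfold_locales (auto simp: same_length_points_def)
        have "x \<in> C \<union> D" "finite (C \<union> D)"
          using mem_orbit orbits_pair_subset fin finite_subset by blast+
        then show ?thesis
          by (rule IH[OF _ orbits_pair_subset _ orbits_pair_closed cycle_count_remove_orbit_pair])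
      qed
      then show ?thesis
        using signed_root_sum_split[OF s] IH[OF mem_orbit orbit_subset finite_orbit orbit_closed
            cycle_count_remove_orbit] by simp
    qed
    also have "\<dots> = cycle_root_weight s k (?c k) * (\<Prod>i\<in>{1..N} - {k}. cycle_root_weight s i (?c i))"
      unfolding card_same_length_points cycle_root_weight_step[OF ck, where s = s and k = k] of_nat_mult
      by (cases "odd k") (simp_all add: algebra_simps)
    also have "\<dots> = (\<Prod>i\<in>{1..N}. cycle_root_weight s i (?c i))"
      by (rule prod.remove[OF _ kN, symmetric]) simp
    finally show ?thesis .
  qed
qed

section \<open>Exponentials of sums of pure powers\<close>

definition msupp :: "(nat \<Rightarrow> nat) \<Rightarrow> nat set" where
  "msupp m = {i. m i \<noteq> 0}"

definition splittings :: "(nat \<Rightarrow> nat) \<Rightarrow> ((nat \<Rightarrow> nat) \<times> (nat \<Rightarrow> nat)) set" where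
  "splittings m = {(a, b). \<forall>i. a i + b i = m i}"

definition var_pow :: "nat \<Rightarrow> nat \<Rightarrow> nat \<Rightarrow> nat" where
  "var_pow i d = (\<lambda>j. if j = i then d else 0)"

definition mdiff :: "(nat \<Rightarrow> nat) \<Rightarrow> (nat \<Rightarrow> nat) \<Rightarrow> nat \<Rightarrow> nat" where
  "mdiff m a = (\<lambda>j. m j - a j)"

lemma mmul_eq_sum_splittings: "mmul f g m = (\<Sum>(a, b)\<in>splittings m. f a * g b)"
  unfolding mmul_def splittings_def by simp

lemma mdeg_eq_sum:
  assumes "finite U" "msupp m \<subseteq> U"
  shows "mdeg m = (\<Sum>j\<in>U. m j)"
  unfolding mdeg_def by (rule sum.mono_neutral_left) (use assms in \<open>auto simp: msupp_def\<close>)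

lemma le_mdeg:
  assumes "finite (msupp m)"
  shows "m i \<le> mdeg m"
proof (cases "m i = 0")
  case False
  then show ?thesis
    using member_le_sum[of i "msupp m" m] assms unfolding mdeg_def msupp_def by simp
qed simp

lemma msupp_mdiff: "msupp (mdiff m a) \<subseteq> msupp m"
  unfolding msupp_def mdiff_def by auto

lemma msupp_var_pow: "d \<ge> 1 \<Longrightarrow> msupp (var_pow i d) = {i}"
  unfolding msupp_def var_pow_def by auto

lemma var_pow_eq_iff:
  assumes "d \<ge> 1"
  shows "var_pow i d = var_pow i' d \<longleftrightarrow> i = i'"
proof
  assume "var_pow i d = var_pow i' d"
  then have "var_pow i d i = var_pow i' d i" by simp
  then show "i = i'" using assms by (auto simp: var_pow_def split: if_splits)
qed simp

lemma msupp_splittings: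
  assumes "(a, b) \<in> splittings m"
  shows "msupp a \<subseteq> msupp m" "msupp b \<subseteq> msupp m"
proof -
  have e: "a i + b i = m i" for i using assms unfolding splittings_def by auto
  show "msupp a \<subseteq> msupp m" "msupp b \<subseteq> msupp m"
    unfolding msupp_def by (auto simp flip: e)
qed

lemma finite_splittings:
  assumes "finite (msupp m)"
  shows "finite (splittings m)"
proof -
  let ?B = "{f. \<forall>x. (x \<in> msupp m \<longrightarrow> f x \<in> {..mdeg m}) \<and> (x \<notin> msupp m \<longrightarrow> f x = 0)}"
  have "finite ?B" by (rule finite_set_of_finite_funs) (use assms in auto)
  moreover have "splittings m \<subseteq> ?B \<times> ?B"
  proof
    fix p assume "p \<in> splittings m"
    then obtain a b where p: "p = (a, b)" "\<And>i. a i + b i = m i" unfolding splittings_def by auto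
    then have "a i \<le> mdeg m \<and> b i \<le> mdeg m" for i using le_mdeg[OF assms, of i] p(2)[of i] by linarith
    moreover have "i \<notin> msupp m \<Longrightarrow> a i = 0 \<and> b i = 0" for i
      using p(2)[of i] unfolding msupp_def by simp
    ultimately show "p \<in> ?B \<times> ?B" using p(1) by auto
  qed
  ultimately show ?thesis using finite_subset by blast
qed

lemma msuminf_eq_single:
  assumes "\<And>j. j \<noteq> j0 \<Longrightarrow> F j m = 0"
  shows "msuminf F m = F j0 m"
proof (cases "F j0 m = 0")
  case True
  then have "F j m = 0" for j using assms by (cases "j = j0") auto
  then show ?thesis unfolding msuminf_def using True by simp
next
  case False
  then have "{j. F j m \<noteq> 0} = {j0}" using assms by auto
  then show ?thesis unfolding msuminf_def by simp
qed

lemma mmul_lincomb_right: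
  "mmul f (\<lambda>b. a * g b + a' * h b) m = a * mmul f g m + a' * mmul f h m"
proof -
  have "mmul f (\<lambda>b. a * g b + a' * h b) m
      = (\<Sum>p\<in>splittings m. a * (f (fst p) * g (snd p)) + a' * (f (fst p) * h (snd p)))"
    unfolding mmul_eq_sum_splittings by (rule sum.cong) (auto simp: algebra_simps)
  then show ?thesis
    unfolding mmul_eq_sum_splittings by (simp add: sum.distrib sum_distrib_left case_prod_beta)
qed

lemma mmul_separable:
  assumes U: "finite U" and c: "msupp c \<subseteq> U"
    and f: "\<And>a. msupp a \<subseteq> U \<Longrightarrow> f a = (\<Prod>j\<in>U. u j (a j))"
    and g: "\<And>b. msupp b \<subseteq> U \<Longrightarrow> g b = (\<Prod>j\<in>U. v j (b j))"
  shows "mmul f g c = (\<Prod>j\<in>U. \<Sum>r\<le>c j. u j r * v j (c j - r))"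
proof -
  have c0: "c j = 0" if "j \<notin> U" for j using c that unfolding msupp_def by blast
  have "mmul f g c = (\<Sum>p\<in>splittings c. \<Prod>j\<in>U. u j (fst p j) * v j (snd p j))"
    unfolding mmul_eq_sum_splittings
  proof (rule sum.cong[OF refl])
    fix p assume p: "p \<in> splittings c"
    obtain a b where ab: "p = (a, b)" by fastforce
    have "msupp a \<subseteq> U" "msupp b \<subseteq> U" using msupp_splittings[of a b c] p ab c by auto
    then show "(case p of (a, b) \<Rightarrow> f a * g b) = (\<Prod>j\<in>U. u j (fst p j) * v j (snd p j))"
      using ab f g by (simp add: prod.distrib)
  qed
  also have "\<dots> = (\<Sum>h\<in>PiE U (\<lambda>j. {..c j}). \<Prod>j\<in>U. u j (h j) * v j (c j - h j))"
  proof (rule sum.reindex_bij_witness[where j = "\<lambda>p. restrict (fst p) U"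
        and i = "\<lambda>h. (\<lambda>j. if j \<in> U then h j else 0, \<lambda>j. if j \<in> U then c j - h j else 0)"])
    fix p assume p: "p \<in> splittings c"
    obtain a b where ab: "p = (a, b)" by fastforce
    have e: "a j + b j = c j" for j using p ab unfolding splittings_def by auto
    have z: "a j = 0 \<and> b j = 0" if "j \<notin> U" for j using e[of j] c0[OF that] by simp
    have "(\<lambda>j. if j \<in> U then restrict a U j else 0) = a"
    proof
      fix j show "(if j \<in> U then restrict a U j else 0) = a j" using z[of j] by auto
    qed
    moreover have "(\<lambda>j. if j \<in> U then c j - restrict a U j else 0) = b"
    proof
      fix j have "c j - a j = b j" using e[of j] by simp
      then show "(if j \<in> U then c j - restrict a U j else 0) = b j" using z[of j] by auto
    qed
    ultimately show "(\<lambda>j. if j \<in> U then restrict (fst p) U j else 0,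
        \<lambda>j. if j \<in> U then c j - restrict (fst p) U j else 0) = p"
      unfolding ab fst_conv by simp
    have "a j \<le> c j" for j using e[of j] by simp
    then show "restrict (fst p) U \<in> PiE U (\<lambda>j. {..c j})" using ab by (simp add: restrict_PiE_iff)
    have "c j - a j = b j" for j using e[of j] by simp
    then show "(\<Prod>j\<in>U. u j (restrict (fst p) U j) * v j (c j - restrict (fst p) U j))
        = (\<Prod>j\<in>U. u j (fst p j) * v j (snd p j))"
      unfolding ab fst_conv snd_conv by (intro prod.cong refl) simp
  next
    fix h assume h: "h \<in> PiE U (\<lambda>j. {..c j})"
    show "restrict (fst (\<lambda>j. if j \<in> U then h j else 0, \<lambda>j. if j \<in> U then c j - h j else 0)) U = h"
    proof
      fix j show "restrict (fst (\<lambda>j. if j \<in> U then h j else 0, \<lambda>j. if j \<in> U then c j - h j else 0)) U j = h j"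
        using PiE_arb[OF h, of j] by (cases "j \<in> U") simp_all
    qed
    have "h j \<le> c j" if "j \<in> U" for j using h that unfolding PiE_iff by blast
    then have "(if j \<in> U then h j else 0) + (if j \<in> U then c j - h j else 0) = c j" for j
      using c0[of j] by (cases "j \<in> U") simp_all
    then show "(\<lambda>j. if j \<in> U then h j else 0, \<lambda>j. if j \<in> U then c j - h j else 0) \<in> splittings c"
      unfolding splittings_def by simp
  qed
  also have "\<dots> = (\<Prod>j\<in>U. \<Sum>r\<le>c j. u j r * v j (c j - r))"
    by (rule prod_sum_PiE[symmetric]) (use U in auto)
  finally show ?thesis .
qed

text \<open>The coefficient of \<open>t\<^sup>r\<close> in \<open>exp (a t\<^sup>d)\<close>.\<close>

definition exp_power_coeff :: "real \<Rightarrow> nat \<Rightarrow> nat \<Rightarrow> real" where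
  "exp_power_coeff a d r = (if d dvd r then a ^ (r div d) / fact (r div d) else 0)"

text \<open>\<open>F = \<Sum>\<^sub>i \<alpha> i t\<^sub>i\<^sup>d\<close>.\<close>

locale pure_power_sum =
  fixes F :: mser and \<alpha> :: "nat \<Rightarrow> real" and d :: nat
  assumes pos: "d \<ge> 1"
    and coeff_var_pow: "\<And>i. F (var_pow i d) = \<alpha> i"
    and coeff_other: "\<And>a. finite (msupp a) \<Longrightarrow> (\<forall>i. a \<noteq> var_pow i d) \<Longrightarrow> F a = 0"
begin

lemma mmul_eq_sum:
  assumes m: "finite (msupp m)"
  shows "mmul F H m = (\<Sum>i\<in>{i. d \<le> m i}. \<alpha> i * H (mdiff m (var_pow i d)))"
proof -
  let ?g = "\<lambda>i. (var_pow i d, mdiff m (var_pow i d))"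
  have "mmul F H m = (\<Sum>p\<in>splittings m. F (fst p) * H (snd p))"
    unfolding mmul_eq_sum_splittings by (simp add: case_prod_beta)
  also have "\<dots> = (\<Sum>p\<in>?g ` {i. d \<le> m i}. F (fst p) * H (snd p))"
  proof (rule sum.mono_neutral_right[OF finite_splittings[OF m]])
    show "?g ` {i. d \<le> m i} \<subseteq> splittings m"
      unfolding splittings_def var_pow_def mdiff_def by auto
    show "\<forall>p\<in>splittings m - ?g ` {i. d \<le> m i}. F (fst p) * H (snd p) = 0"
    proof
      fix p assume p: "p \<in> splittings m - ?g ` {i. d \<le> m i}"
      obtain a b where ab: "p = (a, b)" by fastforce
      have e: "\<And>j. a j + b j = m j" using p ab unfolding splittings_def by auto
      have "a \<noteq> var_pow i d" for i
      proof
        assume a: "a = var_pow i d"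
        then have "d \<le> m i" using e[of i] unfolding var_pow_def by simp
        moreover have "b = mdiff m a" by (simp add: fun_eq_iff mdiff_def flip: e)
        ultimately show False using p ab a by auto
      qed
      moreover have "finite (msupp a)"
        using msupp_splittings(1)[of a b m] p ab m finite_subset by blast
      ultimately show "F (fst p) * H (snd p) = 0" using coeff_other ab by simp
    qed
  qed
  also have "\<dots> = (\<Sum>i\<in>{i. d \<le> m i}. F (var_pow i d) * H (mdiff m (var_pow i d)))"
    by (subst sum.reindex) (auto simp: inj_on_def var_pow_eq_iff[OF pos])
  finally show ?thesis using coeff_var_pow by simp
qed

definition prod_exp_coeff :: "nat set \<Rightarrow> (nat \<Rightarrow> nat) \<Rightarrow> real" where
  "prod_exp_coeff U m = (\<Prod>j\<in>U. \<alpha> j ^ (m j div d) / fact (m j div d))"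

text \<open>The coefficient of \<open>t\<^sup>m\<close> in \<open>F\<^sup>k / k!\<close>.\<close>

definition pow_coeff :: "nat \<Rightarrow> (nat \<Rightarrow> nat) \<Rightarrow> real" where
  "pow_coeff k m = (if (\<forall>i. d dvd m i) \<and> mdeg m = d * k then prod_exp_coeff (msupp m) m else 0)"

lemma prod_exp_coeff_mono_neutral:
  assumes "finite U" "msupp m \<subseteq> U"
  shows "prod_exp_coeff (msupp m) m = prod_exp_coeff U m"
  unfolding prod_exp_coeff_def
  by (rule prod.mono_neutral_left) (use assms in \<open>auto simp: msupp_def\<close>)

lemma mdeg_mdiff_var_pow:
  assumes m: "finite (msupp m)" and i: "d \<le> m i"
  shows "mdeg (mdiff m (var_pow i d)) + d = mdeg m"
proof -
  have iU: "i \<in> msupp m" using i pos unfolding msupp_def by simp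
  have "mdeg (mdiff m (var_pow i d)) = (\<Sum>j\<in>msupp m. mdiff m (var_pow i d) j)"
    using mdeg_eq_sum[OF m msupp_mdiff] .
  also have "\<dots> = mdiff m (var_pow i d) i + (\<Sum>j\<in>msupp m - {i}. mdiff m (var_pow i d) j)"
    by (rule sum.remove[OF m iU])
  also have "\<dots> = (m i - d) + (\<Sum>j\<in>msupp m - {i}. m j)"
    by (auto simp: mdiff_def var_pow_def intro!: sum.cong)
  finally have "mdeg (mdiff m (var_pow i d)) = (m i - d) + (\<Sum>j\<in>msupp m - {i}. m j)" .
  moreover have "mdeg m = m i + (\<Sum>j\<in>msupp m - {i}. m j)"
    using mdeg_eq_sum[OF m subset_refl] sum.remove[OF m iU] by simp
  ultimately show ?thesis using i by simp
qed

lemma prod_exp_coeff_mdiff_var_pow: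
  assumes m: "finite (msupp m)" and i: "d \<le> m i" and dv: "d dvd m i"
  shows "\<alpha> i * prod_exp_coeff (msupp m) (mdiff m (var_pow i d))
       = prod_exp_coeff (msupp m) m * real (m i div d)"
proof -
  let ?f = "\<lambda>m j. \<alpha> j ^ (m j div d) / fact (m j div d)"
  have iU: "i \<in> msupp m" using i pos unfolding msupp_def by simp
  obtain q0 where q0: "m i = d * q0" using dv by blast
  with i pos have "q0 \<noteq> 0" by auto
  with q0 obtain q where q: "m i = d * Suc q" using not0_implies_Suc by blast
  have "(m i - d) div d = q" "m i div d = Suc q"
    using q pos by (simp_all add: diff_mult_distrib2[symmetric])
  moreover have "\<alpha> i * (\<alpha> i ^ q / fact q) = \<alpha> i ^ Suc q / fact (Suc q) * real (Suc q)"
  proof -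
    have "a * (a ^ q / f) = a ^ Suc q / (r * f) * r" if "r \<noteq> 0" "f \<noteq> 0" for a r f :: real
      using that by (simp add: field_simps)
    then show ?thesis unfolding fact_Suc by simp
  qed
  ultimately have at_i: "\<alpha> i * ?f (mdiff m (var_pow i d)) i = ?f m i * real (m i div d)"
    by (simp add: mdiff_def var_pow_def)
  have "(\<Prod>j\<in>msupp m - {i}. ?f (mdiff m (var_pow i d)) j) = (\<Prod>j\<in>msupp m - {i}. ?f m j)"
    by (rule prod.cong) (auto simp: mdiff_def var_pow_def)
  then have A: "prod_exp_coeff (msupp m) (mdiff m (var_pow i d))
      = ?f (mdiff m (var_pow i d)) i * (\<Prod>j\<in>msupp m - {i}. ?f m j)"
    unfolding prod_exp_coeff_def prod.remove[OF m iU] by (simp only:)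
  have B: "prod_exp_coeff (msupp m) m = ?f m i * (\<Prod>j\<in>msupp m - {i}. ?f m j)"
    unfolding prod_exp_coeff_def by (rule prod.remove[OF m iU])
  have "\<alpha> i * prod_exp_coeff (msupp m) (mdiff m (var_pow i d))
      = (\<alpha> i * ?f (mdiff m (var_pow i d)) i) * (\<Prod>j\<in>msupp m - {i}. ?f m j)"
    unfolding A by (simp only: ac_simps)
  also have "\<dots> = (?f m i * real (m i div d)) * (\<Prod>j\<in>msupp m - {i}. ?f m j)"
    by (simp only: at_i)
  also have "\<dots> = prod_exp_coeff (msupp m) m * real (m i div d)"
    unfolding B by (simp only: ac_simps)
  finally show ?thesis .
qed

lemma mpow_eq_fact_mult_pow_coeff:
  "finite (msupp m) \<Longrightarrow> mpow F k m = fact k * pow_coeff k m"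
proof (induction k arbitrary: m)
  case 0
  show ?case
  proof (cases "m = (\<lambda>_. 0)")
    case False
    then obtain i where "m i \<noteq> 0" by auto
    then have "mdeg m \<noteq> 0" using le_mdeg[OF "0.prems", of i] by simp
    then show ?thesis using False unfolding mpow_def mone_def pow_coeff_def by simp
  qed (simp add: mpow_def mone_def pow_coeff_def prod_exp_coeff_def mdeg_def msupp_def)
next
  case (Suc k)
  note m = Suc.prems
  let ?I = "{i. d \<le> m i}"
  have fin: "finite (msupp (mdiff m a))" for a using m msupp_mdiff finite_subset by blast
  have st: "mpow F (Suc k) m = (\<Sum>i\<in>?I. \<alpha> i * (fact k * pow_coeff k (mdiff m (var_pow i d))))"
    using mmul_eq_sum[OF m] Suc.IH[OF fin] by (simp add: mpow_def)
  show ?case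
  proof (cases "(\<forall>i. d dvd m i) \<and> mdeg m = d * Suc k")
    case False
    have "pow_coeff k (mdiff m (var_pow i d)) = 0" if "i \<in> ?I" for i
    proof -
      have "mdeg (mdiff m (var_pow i d)) + d = mdeg m" using mdeg_mdiff_var_pow[OF m] that by simp
      moreover have "d dvd mdiff m (var_pow i d) j \<longleftrightarrow> d dvd m j" for j
        using that by (simp add: mdiff_def var_pow_def dvd_minus_self)
      ultimately show ?thesis using False unfolding pow_coeff_def by auto
    qed
    then have "mpow F (Suc k) m = 0" using st by simp
    moreover have "pow_coeff (Suc k) m = 0" using False unfolding pow_coeff_def by auto
    ultimately show ?thesis by simp
  next
    case True
    then have dv: "\<forall>i. d dvd m i" and dg: "mdeg m = d * Suc k" by auto
    have IU: "?I = msupp m"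
    proof
      show "?I \<subseteq> msupp m" using pos unfolding msupp_def by auto
      show "msupp m \<subseteq> ?I" using dv unfolding msupp_def by (auto intro: dvd_imp_le)
    qed
    have trm: "\<alpha> i * (fact k * pow_coeff k (mdiff m (var_pow i d)))
        = fact k * (prod_exp_coeff (msupp m) m * real (m i div d))" if "i \<in> ?I" for i
    proof -
      have "mdeg (mdiff m (var_pow i d)) = d * k"
        using mdeg_mdiff_var_pow[OF m] that dg by simp
      moreover have "\<forall>j. d dvd mdiff m (var_pow i d) j"
        using dv by (auto simp: mdiff_def var_pow_def)
      ultimately have "pow_coeff k (mdiff m (var_pow i d)) = prod_exp_coeff (msupp m) (mdiff m (var_pow i d))"
        unfolding pow_coeff_def using prod_exp_coeff_mono_neutral[OF m msupp_mdiff] by simp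
      then show ?thesis using prod_exp_coeff_mdiff_var_pow[OF m] that dv by (simp add: algebra_simps)
    qed
    have "mpow F (Suc k) m = (\<Sum>i\<in>?I. fact k * (prod_exp_coeff (msupp m) m * real (m i div d)))"
      unfolding st by (rule sum.cong[OF refl trm])
    also have "\<dots> = fact k * prod_exp_coeff (msupp m) m * real (\<Sum>i\<in>msupp m. m i div d)"
      unfolding IU by (simp add: sum_distrib_left algebra_simps)
    also have "(\<Sum>i\<in>msupp m. m i div d) = Suc k"
    proof -
      have "(\<Sum>i\<in>msupp m. m i) = d * (\<Sum>i\<in>msupp m. m i div d)"
        using dv by (simp add: sum_distrib_left)
      then have "d * (\<Sum>i\<in>msupp m. m i div d) = d * Suc k"
        using dg mdeg_eq_sum[OF m subset_refl] by simp
      then show ?thesis using pos by (simp del: mult_Suc_right)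
    qed
    finally show ?thesis using True unfolding pow_coeff_def by simp
  qed
qed

lemma mexp_eq:
  assumes m: "finite (msupp m)"
  shows "mexp F m = (if \<forall>i. d dvd m i then prod_exp_coeff (msupp m) m else 0)"
proof (cases "\<forall>i. d dvd m i")
  case True
  then have "d dvd mdeg m" unfolding mdeg_def by (simp add: dvd_sum)
  then obtain k0 where k0: "mdeg m = d * k0" by blast
  then have "pow_coeff k m = (if k = k0 then prod_exp_coeff (msupp m) m else 0)" for k
    unfolding pow_coeff_def using True pos by auto
  moreover have "k0 \<le> mdeg m" using k0 pos by simp
  ultimately show ?thesis
    unfolding mexp_def using mpow_eq_fact_mult_pow_coeff[OF m] True by simp
next
  case False
  have "pow_coeff k m = 0" for k
    unfolding pow_coeff_def by (rule if_not_P) (use False in blast)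
  then show ?thesis
    unfolding mexp_def mpow_eq_fact_mult_pow_coeff[OF m] using False by auto
qed

lemma mexp_eq_prod:
  assumes "finite U" "msupp m \<subseteq> U"
  shows "mexp F m = (\<Prod>j\<in>U. exp_power_coeff (\<alpha> j) d (m j))"
proof (cases "\<forall>i. d dvd m i")
  case True
  have "mexp F m = prod_exp_coeff U m"
    using mexp_eq[OF finite_subset[OF assms(2,1)]] True prod_exp_coeff_mono_neutral[OF assms] by simp
  also have "\<dots> = (\<Prod>j\<in>U. exp_power_coeff (\<alpha> j) d (m j))"
    unfolding prod_exp_coeff_def exp_power_coeff_def using True by simp
  finally show ?thesis .
next
  case False
  then obtain i where i: "\<not> d dvd m i" by blast
  then have "m i \<noteq> 0" by (metis dvd_0_right)
  then have "i \<in> U" using assms(2) unfolding msupp_def by blast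
  then have "(\<Prod>j\<in>U. exp_power_coeff (\<alpha> j) d (m j)) = 0"
    using assms(1) i by (intro prod_zero) (auto simp: exp_power_coeff_def)
  then show ?thesis using mexp_eq[OF finite_subset[OF assms(2,1)]] False by simp
qed

end

lemma mvar_eq: "mvar i m = (if m = var_pow i 1 then 1 else 0)"
  unfolding mvar_def var_pow_def by simp

lemma pure_power_sum_mvar: "pure_power_sum (mvar i) (\<lambda>j. if j = i then 1 else 0) 1"
  by unfold_locales (auto simp: mvar_eq var_pow_eq_iff)

lemma mpow_mvar_two:
  assumes m: "finite (msupp m)"
  shows "mpow (mvar i) 2 m = (if m = var_pow i 2 then 1 else 0)"
proof -
  interpret pure_power_sum "mvar i" "\<lambda>j. if j = i then 1 else 0" 1 by (rule pure_power_sum_mvar)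
  have mp: "mpow (mvar i) 2 m = 2 * pow_coeff 2 m" using mpow_eq_fact_mult_pow_coeff[OF m, of 2] by simp
  show ?thesis
  proof (cases "m = var_pow i 2")
    case True
    then have "mdeg m = 2" "msupp m = {i}"
      using mdeg_eq_sum[of "{i}" m] msupp_var_pow[of 2 i] by (simp_all add: var_pow_def)
    then show ?thesis using mp True unfolding pow_coeff_def prod_exp_coeff_def by (simp add: var_pow_def)
  next
    case False
    have "prod_exp_coeff (msupp m) m = 0" if dg: "mdeg m = 2"
    proof -
      have "\<exists>j\<in>msupp m. j \<noteq> i"
      proof (rule ccontr)
        assume "\<not> (\<exists>j\<in>msupp m. j \<noteq> i)"
        then have "msupp m \<subseteq> {i}" by blast
        then have "m = var_pow i 2"
          using dg mdeg_eq_sum[of "{i}" m] unfolding var_pow_def msupp_def by (auto simp: fun_eq_iff)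
        then show False using False by simp
      qed
      then obtain j where "j \<in> msupp m" "j \<noteq> i" by blast
      then show ?thesis unfolding prod_exp_coeff_def
        by (intro prod_zero) (use m in \<open>auto simp: msupp_def\<close>)
    qed
    then show ?thesis using mp False unfolding pow_coeff_def by auto
  qed
qed

section \<open>The generating function\<close>

definition quadsum_term :: "nat \<Rightarrow> mser" where
  "quadsum_term j = (if j = 0 then mzero else
      madd (msmult ((2 * real j - 1) / 2) (mpow (mvar (2*j - 1)) 2))
           (msmult (real j) (mpow (mvar (2*j)) 2)))"

lemma quadsum_eq_msuminf: "quadsum = msuminf quadsum_term"
  unfolding quadsum_def quadsum_term_def ..

lemma quadsum_term_apply:
  assumes "finite (msupp m)"
  shows "quadsum_term j m = (if j = 0 then 0 else
     (if m = var_pow (2*j - 1) 2 then (2 * real j - 1) / 2 else 0) + (if m = var_pow (2*j) 2 then real j else 0))"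
  unfolding quadsum_term_def using mpow_mvar_two[OF assms] by (simp add: mzero_def madd_def msmult_def)

lemma quadsum_var_pow_two: "quadsum (var_pow i 2) = real i / 2"
proof -
  define j0 where "j0 = (i + 1) div 2"
  have fin: "finite (msupp (var_pow i 2))" by (simp add: msupp_var_pow)
  have eq: "var_pow i 2 = var_pow i' 2 \<longleftrightarrow> i = i'" for i' by (simp add: var_pow_eq_iff)
  have j0: "j = j0" if "j \<noteq> 0" "i = 2 * j - 1 \<or> i = 2 * j" for j
    using that unfolding j0_def by presburger
  have "quadsum (var_pow i 2) = quadsum_term j0 (var_pow i 2)"
    unfolding quadsum_eq_msuminf
  proof (rule msuminf_eq_single)
    fix j assume "j \<noteq> j0"
    then have "\<not> (j \<noteq> 0 \<and> (i = 2 * j - 1 \<or> i = 2 * j))" using j0 by blast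
    then show "quadsum_term j (var_pow i 2) = 0" by (auto simp: quadsum_term_apply[OF fin] eq)
  qed
  also have "\<dots> = real i / 2"
  proof (cases "odd i")
    case True
    then have "j0 \<noteq> 0" "2 * j0 - 1 = i" "i \<noteq> 2 * j0" "i + 1 = 2 * j0"
      unfolding j0_def by presburger+
    moreover from \<open>i + 1 = 2 * j0\<close> have "real i = 2 * real j0 - 1"
      by (metis add_diff_cancel_right' of_nat_1 of_nat_add of_nat_mult of_nat_numeral)
    ultimately show ?thesis by (simp add: quadsum_term_apply[OF fin] eq)
  next
    case False
    then have "2 * j0 = i" "j0 = 0 \<or> i \<noteq> 2 * j0 - 1" unfolding j0_def by presburger+
    then show ?thesis by (auto simp: quadsum_term_apply[OF fin] eq)
  qed
  finally show ?thesis .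
qed

lemma pure_power_sum_quadsum: "pure_power_sum (msmult s quadsum) (\<lambda>i. s * (real i / 2)) 2"
proof
  show "msmult s quadsum (var_pow i 2) = s * (real i / 2)" for i
    by (simp add: msmult_def quadsum_var_pow_two)
  show "msmult s quadsum a = 0" if "finite (msupp a)" "\<forall>i. a \<noteq> var_pow i 2" for a
    using that unfolding msmult_def quadsum_eq_msuminf msuminf_def
    by (simp add: quadsum_term_apply)
qed simp

lemma pure_power_sum_oddvars: "pure_power_sum oddvars (\<lambda>i. if odd i then 1 else 0) 1"
proof
  have summand: "(if j = 0 then mzero else mvar (2*j - 1)) m
      = (if j \<noteq> 0 \<and> m = var_pow (2*j - 1) 1 then 1 else 0)" for j m
    by (simp add: mzero_def mvar_eq)
  show "oddvars (var_pow i 1) = (if odd i then 1 else 0)" for i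
  proof -
    define j0 where "j0 = (i + 1) div 2"
    have j0: "j = j0" if "j \<noteq> 0" "i = 2 * j - 1" for j
      using that unfolding j0_def by presburger
    have "oddvars (var_pow i 1) = (if j0 = 0 then mzero else mvar (2*j0 - 1)) (var_pow i 1)"
      unfolding oddvars_def
    proof (rule msuminf_eq_single)
      fix j assume "j \<noteq> j0"
      then have "\<not> (j \<noteq> 0 \<and> i = 2 * j - 1)" using j0 by blast
      then show "(if j = 0 then mzero else mvar (2 * j - 1)) (var_pow i 1) = 0"
        by (simp add: summand var_pow_eq_iff)
    qed
    moreover have "(j0 \<noteq> 0 \<and> i = 2 * j0 - 1) \<longleftrightarrow> odd i" unfolding j0_def by presburger
    ultimately show ?thesis by (simp add: summand var_pow_eq_iff)
  qed
  show "oddvars a = 0" if "\<forall>i. a \<noteq> var_pow i 1" for a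
    using that unfolding oddvars_def msuminf_def by (simp add: summand)
qed simp

definition cauchy_conv :: "(nat \<Rightarrow> real) \<Rightarrow> (nat \<Rightarrow> real) \<Rightarrow> nat \<Rightarrow> real" where
  "cauchy_conv u v m = (\<Sum>r\<le>m. u r * v (m - r))"

lemma cauchy_conv_commute: "cauchy_conv u v m = cauchy_conv v u m"
  unfolding cauchy_conv_def
  by (rule sum.reindex_bij_witness[where i = "\<lambda>r. m - r" and j = "\<lambda>r. m - r"]) (auto simp: mult.commute)

text \<open>The coefficientwise form of the product rule \<open>(u v)' = u' v + u v'\<close>.\<close>

lemma cauchy_conv_product_rule:
  "real (Suc m) * cauchy_conv u v (Suc m)
     = cauchy_conv (\<lambda>r. real (Suc r) * u (Suc r)) v m + cauchy_conv u (\<lambda>q. real q * v q) (Suc m)"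
proof -
  have "real (Suc m) * cauchy_conv u v (Suc m)
      = (\<Sum>r\<le>Suc m. real r * (u r * v (Suc m - r))) + (\<Sum>r\<le>Suc m. real (Suc m - r) * (u r * v (Suc m - r)))"
    unfolding cauchy_conv_def sum_distrib_left sum.distrib[symmetric]
    by (rule sum.cong) (auto simp: distrib_right[symmetric])
  also have "(\<Sum>r\<le>Suc m. real r * (u r * v (Suc m - r))) = cauchy_conv (\<lambda>r. real (Suc r) * u (Suc r)) v m"
    unfolding cauchy_conv_def by (subst sum.atMost_Suc_shift) (simp add: mult.assoc del: of_nat_Suc)
  also have "(\<Sum>r\<le>Suc m. real (Suc m - r) * (u r * v (Suc m - r))) = cauchy_conv u (\<lambda>q. real q * v q) (Suc m)"
    unfolding cauchy_conv_def by (rule sum.cong[OF refl]) (rule mult.left_commute)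
  finally show ?thesis .
qed

lemma exp_power_coeff_one_Suc: "real (Suc r) * exp_power_coeff a 1 (Suc r) = a * exp_power_coeff a 1 r"
  unfolding exp_power_coeff_def by (simp add: field_simps del: of_nat_Suc)

lemma exp_power_coeff_two_Suc_Suc:
  "real (Suc (Suc q)) * exp_power_coeff b 2 (Suc (Suc q)) = 2 * b * exp_power_coeff b 2 q"
proof (cases "even q")
  case True
  then obtain p where "q = 2 * p" by blast
  moreover have "real (Suc (Suc (2 * p))) = 2 * real (Suc p)" by simp
  ultimately show ?thesis
    unfolding exp_power_coeff_def by (simp add: field_simps del: of_nat_Suc)
qed (simp add: exp_power_coeff_def)

lemma exp_power_coeff_two_one: "exp_power_coeff b 2 (Suc 0) = 0"
  unfolding exp_power_coeff_def by simp

text \<open>The coefficient of \<open>t\<^sup>m\<close> in \<open>exp (a t + b t\<^sup>2)\<close>.\<close>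

definition exp_quadratic_coeff :: "real \<Rightarrow> real \<Rightarrow> nat \<Rightarrow> real" where
  "exp_quadratic_coeff a b = cauchy_conv (exp_power_coeff a 1) (exp_power_coeff b 2)"

lemma exp_quadratic_coeff_rec:
  "real (Suc (Suc m)) * exp_quadratic_coeff a b (Suc (Suc m))
     = a * exp_quadratic_coeff a b (Suc m) + 2 * b * exp_quadratic_coeff a b m"
proof -
  let ?u = "exp_power_coeff a 1" and ?v = "exp_power_coeff b 2"
  have "cauchy_conv (\<lambda>r. real (Suc r) * ?u (Suc r)) ?v (Suc m) = a * exp_quadratic_coeff a b (Suc m)"
    unfolding exp_quadratic_coeff_def cauchy_conv_def exp_power_coeff_one_Suc
    by (simp add: sum_distrib_left mult.assoc del: sum.atMost_Suc)
  moreover have "cauchy_conv ?u (\<lambda>q. real q * ?v q) (Suc (Suc m)) = 2 * b * exp_quadratic_coeff a b m"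
  proof -
    have "cauchy_conv ?u (\<lambda>q. real q * ?v q) (Suc (Suc m))
        = cauchy_conv (\<lambda>q. real q * ?v q) ?u (Suc (Suc m))"
      by (rule cauchy_conv_commute)
    also have "\<dots> = (\<Sum>q\<le>m. real (Suc (Suc q)) * ?v (Suc (Suc q)) * ?u (m - q))"
      unfolding cauchy_conv_def sum.atMost_Suc_shift
      by (simp add: exp_power_coeff_two_one del: of_nat_Suc)
    also have "\<dots> = 2 * b * cauchy_conv ?v ?u m"
      unfolding cauchy_conv_def exp_power_coeff_two_Suc_Suc by (simp add: sum_distrib_left mult.assoc)
    finally show ?thesis unfolding exp_quadratic_coeff_def cauchy_conv_commute[of ?v] .
  qed
  ultimately show ?thesis
    using cauchy_conv_product_rule[of "Suc m" ?u ?v] unfolding exp_quadratic_coeff_def by simp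
qed

lemma fact_mult_exp_quadratic_coeff:
  "fact m * exp_quadratic_coeff (if odd k then 1 else 0) (s * real k / 2) m = cycle_root_weight s k m"
proof (induction s k m rule: cycle_root_weight.induct)
  case (3 s k m)
  let ?q = "exp_quadratic_coeff (if odd k then 1 else 0) (s * real k / 2)"
  have "fact (Suc (Suc m)) * ?q (Suc (Suc m)) = fact (Suc m) * (real (Suc (Suc m)) * ?q (Suc (Suc m)))"
    by (simp add: algebra_simps)
  also have "\<dots> = (if odd k then 1 else 0) * (fact (Suc m) * ?q (Suc m))
      + s * real k * real (Suc m) * (fact m * ?q m)"
    unfolding exp_quadratic_coeff_rec by (simp add: algebra_simps)
  finally show ?case using 3 by simp
qed (simp_all add: exp_quadratic_coeff_def cauchy_conv_def exp_power_coeff_def)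

lemma coeff_exp_oddvars_exp_quadsum:
  assumes "finite U" "msupp c \<subseteq> U"
  shows "mmul (mexp oddvars) (mexp (msmult s quadsum)) c * (\<Prod>j\<in>U. fact (c j))
       = (\<Prod>j\<in>U. cycle_root_weight s j (c j))"
proof -
  interpret O: pure_power_sum oddvars "\<lambda>i. if odd i then 1 else 0" 1
    by (rule pure_power_sum_oddvars)
  interpret Q: pure_power_sum "msmult s quadsum" "\<lambda>i. s * (real i / 2)" 2
    by (rule pure_power_sum_quadsum)
  let ?q = "\<lambda>j. exp_quadratic_coeff (if odd j then 1 else 0) (s * (real j / 2)) (c j)"
  have "mmul (mexp oddvars) (mexp (msmult s quadsum)) c = (\<Prod>j\<in>U. ?q j)"
    unfolding exp_quadratic_coeff_def cauchy_conv_def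
    by (rule mmul_separable[OF assms]) (simp_all add: O.mexp_eq_prod[OF assms(1)] Q.mexp_eq_prod[OF assms(1)])
  then have "mmul (mexp oddvars) (mexp (msmult s quadsum)) c * (\<Prod>j\<in>U. fact (c j))
      = (\<Prod>j\<in>U. fact (c j) * ?q j)"
    by (simp add: prod.distrib mult.commute)
  then show ?thesis by (simp add: fact_mult_exp_quadratic_coeff)
qed

lemma even_series_eq:
  "even_series m = (mmul (mexp oddvars) (mexp quadsum) m + mmul (mexp oddvars) (mexp (mneg quadsum)) m) / 2"
proof -
  have cosh: "mcosh quadsum = (\<lambda>b. 1/2 * mexp quadsum b + 1/2 * mexp (mneg quadsum) b)"
    unfolding mcosh_def msmult_def madd_def by (simp add: distrib_left)
  show ?thesis unfolding even_series_def cosh mmul_lincomb_right by simp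
qed

lemma odd_series_eq:
  "odd_series m = (mmul (mexp oddvars) (mexp quadsum) m - mmul (mexp oddvars) (mexp (mneg quadsum)) m) / 2"
proof -
  have sinh: "msinh quadsum = (\<lambda>b. 1/2 * mexp quadsum b + (- 1/2) * mexp (mneg quadsum) b)"
    unfolding msinh_def msmult_def madd_def mneg_def[of "mexp _"] by (simp add: algebra_simps)
  show ?thesis unfolding odd_series_def sinh mmul_lincomb_right by simp
qed

lemma coeff_exp_oddvars_exp_quadsum_eq_roots:
  assumes "\<sigma> permutes {1..n}" "has_cycle_type n \<sigma> c" "msupp c \<subseteq> {1..n}" "s * s = 1"
  shows "mmul (mexp oddvars) (mexp (msmult s quadsum)) c * (\<Prod>i = 1..n. fact (c i))
       = real (card {\<tau>. \<tau> permutes {1..n} \<and> \<tau> \<circ> \<tau> = \<sigma> \<and> evenperm \<tau>})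
         + s * real (card {\<tau>. \<tau> permutes {1..n} \<and> \<tau> \<circ> \<tau> = \<sigma> \<and> \<not> evenperm \<tau>})"
proof -
  have "cycle_count {1..n} \<sigma> j = c j" if "j \<in> {1..n}" for j
    using assms(2) that unfolding has_cycle_type_def cycle_count_def orbits_of_card_def by blast
  then have "mmul (mexp oddvars) (mexp (msmult s quadsum)) c * (\<Prod>i = 1..n. fact (c i))
      = (\<Prod>j\<in>{1..n}. cycle_root_weight s j (cycle_count {1..n} \<sigma> j))"
    using coeff_exp_oddvars_exp_quadsum[OF _ assms(3)] by simp
  also have "\<dots> = signed_root_sum s {1..n} \<sigma>"
    using signed_root_sum_eq_prod[of "{1..n}" \<sigma> s n] assms(1,4) by simp
  also have "\<dots> = real (card {\<tau>. \<tau> permutes {1..n} \<and> \<tau> \<circ> \<tau> = \<sigma> \<and> evenperm \<tau>})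
         + s * real (card {\<tau>. \<tau> permutes {1..n} \<and> \<tau> \<circ> \<tau> = \<sigma> \<and> \<not> evenperm \<tau>})"
    by (rule signed_root_sum_eq_counts) simp
  finally show ?thesis .
qed

theorem mainTheorem6:
  fixes n :: nat and c :: "nat \<Rightarrow> nat" and \<sigma> :: "nat \<Rightarrow> nat"
  assumes "n > 0"
    and "\<forall>i. c i \<noteq> 0 \<longrightarrow> 1 \<le> i \<and> i \<le> n"
    and "n = (\<Sum>i = 1..n. i * c i)"
    and "\<sigma> permutes {1..n}"
    and "has_cycle_type n \<sigma> c"
  shows "egf_coeff even_series n c =
           real (card {\<tau>. \<tau> permutes {1..n} \<and> \<tau> \<circ> \<tau> = \<sigma> \<and> evenperm \<tau>})
       \<and> egf_coeff odd_series n c =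
           real (card {\<tau>. \<tau> permutes {1..n} \<and> \<tau> \<circ> \<tau> = \<sigma> \<and> \<not> evenperm \<tau>})"
proof -
  have supp: "msupp c \<subseteq> {1..n}" using assms(2) unfolding msupp_def by auto
  have "msmult 1 quadsum = quadsum" "msmult (-1) quadsum = mneg quadsum"
    by (simp_all add: msmult_def mneg_def)
  then have "mmul (mexp oddvars) (mexp quadsum) c * (\<Prod>i = 1..n. fact (c i))
      = real (card {\<tau>. \<tau> permutes {1..n} \<and> \<tau> \<circ> \<tau> = \<sigma> \<and> evenperm \<tau>})
        + real (card {\<tau>. \<tau> permutes {1..n} \<and> \<tau> \<circ> \<tau> = \<sigma> \<and> \<not> evenperm \<tau>})"
    "mmul (mexp oddvars) (mexp (mneg quadsum)) c * (\<Prod>i = 1..n. fact (c i))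
      = real (card {\<tau>. \<tau> permutes {1..n} \<and> \<tau> \<circ> \<tau> = \<sigma> \<and> evenperm \<tau>})
        - real (card {\<tau>. \<tau> permutes {1..n} \<and> \<tau> \<circ> \<tau> = \<sigma> \<and> \<not> evenperm \<tau>})"
    using coeff_exp_oddvars_exp_quadsum_eq_roots[OF assms(4,5) supp, of 1]
      coeff_exp_oddvars_exp_quadsum_eq_roots[OF assms(4,5) supp, of "-1"] by simp_all
  then show ?thesis
    unfolding egf_coeff_def even_series_eq odd_series_eq by (simp add: field_simps)
qed

end
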